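(* Let $d\geq2$ and let $\mathcal{D}\subset\mathbb{R}^d$ be bounded and convex, containing the cube $[0,\epsilon)^d$ for some $\epsilon>0$. Let $\alpha=(\alpha_1,\ldots,\alpha_d)\in\mathbb{R}^d$ satisfy \[\liminf_{n\to\infty} n\,\|n\alpha_1\|_{\mathbb{R}/\mathbb{Z}}\cdots\|n\alpha_d\|_{\mathbb{R}/\mathbb{Z}}>0 .\] Then there is a constant $\Theta<\infty$ such that \[\max_{k\in\mathcal{D}_T\cap\mathbb{Z}^d} F\left(\begin{pmatrix}1_d & {}^t\alpha\\ 0 & 1\end{pmatrix}\begin{pmatrix}T^{-1} & {}^t0\\ 0 & \det T\end{pmatrix},\ kT^{-1}\right)\leq\Theta\] for all $T=\operatorname{diag}(T_1,\ldots,T_d)$ with $T_1,\ldots,T_d\geq1$.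
   Context: Vectors are row vectors; ${}^t\alpha$ is the column vector transpose of $\alpha$, $1_d$ the $d\times d$ identity. For $M\in\operatorname{SL}(d+1,\mathbb{R})$ and $t\in\mathbb{R}^d$, $F(M,t)=\min\{y>0\mid (x,y)\in\mathbb{Z}^{d+1}M,\ x+t\in\mathcal{D}\}$ ($x\in\mathbb{R}^d$, $y\in\mathbb{R}$), where $\mathbb{Z}^{d+1}M$ is the lattice spanned by the rows of $M$, and $F(M,t)=\infty$ if no minimum exists. $\mathcal{D}_T=\{xT\mid x\in\mathcal{D}\}$. $\|x\|_{\mathbb{R}/\mathbb{Z}}$ is the distance from $x$ to the nearest integer. *)

theory Defs
  imports "HOL-Analysis.Analysis" "HOL-Library.Extended_Real"
begin

definition dZ :: "real \<Rightarrow> real" where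
  "dZ x = infdist x (\<int> :: real set)"

definition row_lattice :: "real^'n^'n \<Rightarrow> (real^'n) set" where
  "row_lattice M = {v v* M | v. \<forall>i. v $ i \<in> \<int>}"

text \<open>Index type 'd option for R^(d+1): Some i is the i-th x-coordinate, None is the y-coordinate.\<close>
definition xpart :: "real^('d::finite option) \<Rightarrow> real^'d" where
  "xpart w = (\<chi> i. w $ Some i)"

definition ypart :: "real^('d::finite option) \<Rightarrow> real" where
  "ypart w = w $ None"

definition block :: "real^'d::finite^'d \<Rightarrow> real^'d \<Rightarrow> real^'d \<Rightarrow> real \<Rightarrow> real^('d::finite option)^('d option)" where
  "block A b c s = (\<chi> i j. case i of
      Some i' \<Rightarrow> (case j of Some j' \<Rightarrow> A $ i' $ j' | None \<Rightarrow> b $ i')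
    | None \<Rightarrow> (case j of Some j' \<Rightarrow> c $ j' | None \<Rightarrow> s))"

definition diagm :: "('d::finite \<Rightarrow> real) \<Rightarrow> real^'d^'d" where
  "diagm t = (\<chi> i j. if i = j then t i else 0)"

definition Fset :: "(real^'d::finite) set \<Rightarrow> real^('d::finite option)^('d option) \<Rightarrow> real^'d \<Rightarrow> real set" where
  "Fset D M t = {ypart w | w. w \<in> row_lattice M \<and> ypart w > 0 \<and> xpart w + t \<in> D}"

definition F :: "(real^'d::finite) set \<Rightarrow> real^('d::finite option)^('d option) \<Rightarrow> real^'d \<Rightarrow> ereal" where
  "F D M t = (if \<exists>y\<in>Fset D M t. \<forall>z\<in>Fset D M t. y \<le> z
              then ereal (THE y. y \<in> Fset D M t \<and> (\<forall>z\<in>Fset D M t. y \<le> z))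
              else \<infinity>)"

end

theory Submission
  imports Defs
begin

text \<open>Write \<open>T = diag t\<close>. A point \<open>(x, y) = v M\<close> of the lattice has \<open>x\<^sub>i = v\<^sub>i / t\<^sub>i\<close> and
  \<open>y = (\<Sum>\<^sub>i v\<^sub>i \<alpha>\<^sub>i + v\<^sub>0) det T\<close>. Coordinates with \<open>\<epsilon> t\<^sub>i\<close> below a threshold \<open>L\<close> can be put at
  \<open>x\<^sub>i + k\<^sub>i/t\<^sub>i = 0\<close>; rescaling the others by \<open>N\<^sub>i = \<epsilon> t\<^sub>i / L\<close>, it suffices to bound, uniformly
  in \<open>N \<ge> 1\<close>, the covering radius of the unimodular lattices
  \<open>\<Lambda>(N) = {(v\<^sub>i / N\<^sub>i, (\<Sum>\<^sub>i v\<^sub>i \<alpha>\<^sub>i + v\<^sub>0) \<Prod>\<^sub>i N\<^sub>i)}\<close>.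
  The dual lattices \<open>{((p\<^sub>i - q \<alpha>\<^sub>i) N\<^sub>i, q / \<Prod>\<^sub>i N\<^sub>i)}\<close> avoid a fixed cube because \<open>\<alpha>\<close> is
  multiplicatively badly approximable; a pigeonhole (transference) argument shows that then
  \<open>\<Lambda>(N)\<close> avoids a fixed cube too. A volume count gives many points of \<open>\<Lambda>(N)\<close> in a fixed larger
  cube; having no short differences they span, and rounding in a basis among them bounds the
  covering radius.\<close>

section \<open>Badly approximable vectors\<close>

lemma dZ_eq_abs_round: "dZ x = \<bar>x - of_int (round x)\<bar>"
proof (rule antisym)
  show "dZ x \<le> \<bar>x - of_int (round x)\<bar>"
    unfolding dZ_def using infdist_le[of "of_int (round x)" "\<int>" x]
    by (simp add: dist_real_def)
  have "(\<int>::real set) \<noteq> {}" by auto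
  then show "\<bar>x - of_int (round x)\<bar> \<le> dZ x"
    unfolding dZ_def infdist_def
    by (auto intro!: cINF_greatest simp: dist_real_def elim!: Ints_cases intro: round_diff_minimal)
qed

lemma dZ_le: "p \<in> \<int> \<Longrightarrow> dZ x \<le> \<bar>x - p\<bar>"
  by (auto simp: dZ_eq_abs_round elim!: Ints_cases intro: round_diff_minimal)

lemma dZ_nonneg: "0 \<le> dZ x"
  by (simp add: dZ_eq_abs_round)

lemma dZ_le_1: "dZ x \<le> 1"
  using of_int_round_abs_le[of x] by (simp add: dZ_eq_abs_round abs_minus_commute)

lemma dZ_minus: "dZ (- x) = dZ x"
proof -
  have "dZ (- y) \<le> dZ y" for y
    using dZ_le[of "- of_int (round y)" "- y"] by (simp add: dZ_eq_abs_round abs_minus_commute)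
  from this[of x] this[of "- x"] show ?thesis by simp
qed

lemma dZ_eq_0_iff: "dZ x = 0 \<longleftrightarrow> x \<in> \<int>"
  using dZ_le[of x x] dZ_nonneg[of x] by (auto simp: dZ_eq_abs_round) (metis Ints_of_int)

lemma liminf_pos_imp_uniform_lower_bound:
  fixes f :: "nat \<Rightarrow> real"
  assumes lim: "liminf (\<lambda>n. ereal (f n)) > 0" and pos: "\<And>n. n \<ge> 1 \<Longrightarrow> f n > 0"
  shows "\<exists>c>0. \<forall>n\<ge>1. c \<le> f n"
proof -
  obtain c where c: "0 < c" "ereal c < liminf (\<lambda>n. ereal (f n))"
    using ereal_dense2[OF lim[unfolded zero_ereal_def]] by auto
  from less_LiminfD[OF c(2)] obtain n0 where n0: "\<And>n. n \<ge> n0 \<Longrightarrow> c < f n"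
    by (auto simp: eventually_sequentially)
  define c' where "c' = Min (insert c (f ` {1..n0}))"
  have "c' \<le> f n" if "n \<ge> 1" for n
  proof (cases "n \<le> n0")
    case True
    then show ?thesis unfolding c'_def using that by (intro Min_le) auto
  next
    case False
    then have "c' \<le> c" unfolding c'_def by simp
    then show ?thesis using n0[of n] False by linarith
  qed
  moreover have "c' > 0" unfolding c'_def using c(1) pos by auto
  ultimately show ?thesis by blast
qed

lemma badly_approximable_uniform:
  fixes \<alpha> :: "real^'d"
  assumes lim: "liminf (\<lambda>n::nat. ereal (real n * (\<Prod>i\<in>UNIV. dZ (real n * \<alpha> $ i)))) > 0"
  shows "\<exists>c>0. \<forall>J (q::int). q \<noteq> 0 \<longrightarrow> c \<le> \<bar>of_int q\<bar> * (\<Prod>i\<in>J. dZ (of_int q * \<alpha> $ i))"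
proof -
  define f where "f n = real n * (\<Prod>i\<in>UNIV. dZ (real n * \<alpha> $ i))" for n
  from less_LiminfD[OF lim[unfolded zero_ereal_def]] obtain n0 where n0: "\<And>n. n \<ge> n0 \<Longrightarrow> 0 < f n"
    by (auto simp: eventually_sequentially f_def)
  have "f n > 0" if "n \<ge> 1" for n
  proof -
    have "dZ (real n * \<alpha> $ i) \<noteq> 0" for i
    proof
      assume "dZ (real n * \<alpha> $ i) = 0"
      then have "real n * \<alpha> $ i \<in> \<int>" by (simp add: dZ_eq_0_iff)
      then have "real ((n0 + 1) * n) * \<alpha> $ i \<in> \<int>"
        by (metis Ints_mult Ints_of_nat mult.assoc of_nat_mult)
      then have "dZ (real ((n0 + 1) * n) * \<alpha> $ i) = 0" by (simp only: dZ_eq_0_iff)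
      then have "f ((n0 + 1) * n) = 0"
        unfolding f_def by (metis UNIV_I finite mult_zero_right prod_zero_iff)
      moreover have "(n0 + 1) * n \<ge> n0" using mult_le_mono2[OF that, of "n0 + 1"] by (simp only: mult_1_right)
      ultimately show False using n0 by fastforce
    qed
    then have "(\<Prod>i\<in>UNIV. dZ (real n * \<alpha> $ i)) > 0"
      using dZ_nonneg by (simp add: order.not_eq_order_implies_strict prod_pos)
    then show ?thesis using that unfolding f_def by simp
  qed
  then obtain c where c: "c > 0" "\<And>n. n \<ge> 1 \<Longrightarrow> c \<le> f n"
    using liminf_pos_imp_uniform_lower_bound[of f] lim unfolding f_def by blast
  have "c \<le> \<bar>of_int q\<bar> * (\<Prod>i\<in>J. dZ (of_int q * \<alpha> $ i))" if "q \<noteq> 0" for J and q :: int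
  proof -
    have "dZ (of_int q * \<alpha> $ i) = dZ (real (nat \<bar>q\<bar>) * \<alpha> $ i)" for i
    proof (cases "q \<ge> 0")
      case False
      then have "of_int q * \<alpha> $ i = - (real (nat \<bar>q\<bar>) * \<alpha> $ i)" by simp
      then show ?thesis by (simp only: dZ_minus)
    qed simp
    then have "c \<le> \<bar>of_int q\<bar> * (\<Prod>i\<in>UNIV. dZ (of_int q * \<alpha> $ i))"
      using c(2)[of "nat \<bar>q\<bar>"] that unfolding f_def by simp
    also have "(\<Prod>i\<in>UNIV. dZ (of_int q * \<alpha> $ i))
        = (\<Prod>i\<in>J. dZ (of_int q * \<alpha> $ i)) * (\<Prod>i\<in>UNIV - J. dZ (of_int q * \<alpha> $ i))"
      using prod.subset_diff[of J UNIV] by (simp add: mult.commute)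
    also have "\<dots> \<le> (\<Prod>i\<in>J. dZ (of_int q * \<alpha> $ i))"
      by (intro mult_left_le prod_le_1 prod_nonneg) (auto simp: dZ_nonneg dZ_le_1)
    finally show ?thesis by (simp add: mult_left_mono)
  qed
  with c(1) show ?thesis by blast
qed

section \<open>Pigeonhole and coordinate estimates\<close>

lemma box_pigeonhole:
  fixes X :: "'x set" and K :: "'k set" and \<phi> :: "'x \<Rightarrow> 'k \<Rightarrow> real"
  assumes "finite X" "finite K"
    and range: "\<And>x \<kappa>. x \<in> X \<Longrightarrow> \<kappa> \<in> K \<Longrightarrow> lo \<kappa> \<le> \<phi> x \<kappa> \<and> \<phi> x \<kappa> \<le> hi \<kappa>"
    and w: "\<And>\<kappa>. \<kappa> \<in> K \<Longrightarrow> w \<kappa> > 0"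
    and lo_hi: "\<And>\<kappa>. \<kappa> \<in> K \<Longrightarrow> lo \<kappa> \<le> hi \<kappa>"
    and card: "(\<Prod>\<kappa>\<in>K. (hi \<kappa> - lo \<kappa>) / w \<kappa> + 1) < real (card X)"
  shows "\<exists>x\<in>X. \<exists>x'\<in>X. x \<noteq> x' \<and> (\<forall>\<kappa>\<in>K. \<bar>\<phi> x \<kappa> - \<phi> x' \<kappa>\<bar> < w \<kappa>)"
proof -
  define cell where "cell x = restrict (\<lambda>\<kappa>. \<lfloor>(\<phi> x \<kappa> - lo \<kappa>) / w \<kappa>\<rfloor>) K" for x
  define C where "C = PiE K (\<lambda>\<kappa>. {0..\<lfloor>(hi \<kappa> - lo \<kappa>) / w \<kappa>\<rfloor>})"
  have "cell ` X \<subseteq> C"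
    using range w unfolding C_def cell_def
    by (fastforce intro!: floor_mono divide_right_mono simp: divide_nonneg_pos)
  moreover have "finite C" unfolding C_def using assms(2) by (auto intro!: finite_PiE)
  moreover have "real (card C) \<le> (\<Prod>\<kappa>\<in>K. (hi \<kappa> - lo \<kappa>) / w \<kappa> + 1)"
  proof -
    have "real (card C) = (\<Prod>\<kappa>\<in>K. real (nat (\<lfloor>(hi \<kappa> - lo \<kappa>) / w \<kappa>\<rfloor> + 1)))"
      unfolding C_def using assms(2) by (simp add: card_PiE)
    also have "\<dots> \<le> (\<Prod>\<kappa>\<in>K. (hi \<kappa> - lo \<kappa>) / w \<kappa> + 1)"
    proof (intro prod_mono conjI)
      fix \<kappa> assume "\<kappa> \<in> K"
      then have "0 \<le> (hi \<kappa> - lo \<kappa>) / w \<kappa>" using w lo_hi by (simp add: less_imp_le)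
      then show "real (nat (\<lfloor>(hi \<kappa> - lo \<kappa>) / w \<kappa>\<rfloor> + 1)) \<le> (hi \<kappa> - lo \<kappa>) / w \<kappa> + 1"
        by linarith
    qed simp
    finally show ?thesis .
  qed
  ultimately have "card (cell ` X) < card X"
    using card card_mono by (metis le_less_trans of_nat_le_iff of_nat_less_iff)
  then obtain x x' where "x \<in> X" "x' \<in> X" "x \<noteq> x'" "cell x = cell x'"
    using pigeonhole unfolding inj_on_def by blast
  moreover have "\<bar>\<phi> x \<kappa> - \<phi> x' \<kappa>\<bar> < w \<kappa>" if "\<kappa> \<in> K" "cell x = cell x'" for x x' \<kappa>
  proof -
    have "\<lfloor>(\<phi> x \<kappa> - lo \<kappa>) / w \<kappa>\<rfloor> = \<lfloor>(\<phi> x' \<kappa> - lo \<kappa>) / w \<kappa>\<rfloor>"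
      using fun_cong[OF that(2), of \<kappa>] that(1) unfolding cell_def by simp
    then have "\<bar>(\<phi> x \<kappa> - lo \<kappa>) / w \<kappa> - (\<phi> x' \<kappa> - lo \<kappa>) / w \<kappa>\<bar> < 1" by linarith
    then have "\<bar>(\<phi> x \<kappa> - \<phi> x' \<kappa>) / w \<kappa>\<bar> < 1" by (simp add: diff_divide_distrib)
    then show ?thesis using w[OF that(1)] by (simp add: abs_divide)
  qed
  ultimately show ?thesis by blast
qed

lemma exists_max_abs_component: "\<exists>l0. \<forall>l. \<bar>x $ l\<bar> \<le> \<bar>(x::real^'n) $ l0\<bar>"
proof -
  have "Max (range (\<lambda>l. \<bar>x $ l\<bar>)) \<in> range (\<lambda>l. \<bar>x $ l\<bar>)" by (intro Max_in) auto
  then obtain l0 where "Max (range (\<lambda>l. \<bar>x $ l\<bar>)) = \<bar>x $ l0\<bar>" by (elim rangeE)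
  moreover have "\<bar>x $ l\<bar> \<le> Max (range (\<lambda>l. \<bar>x $ l\<bar>))" for l by (intro Max_ge) auto
  ultimately show ?thesis by metis
qed

lemma abs_component_le_if_inner_zero:
  fixes w z :: "real^'n"
  assumes "inner w z = 0" and max: "\<And>l. \<bar>z $ l\<bar> \<le> \<bar>z $ l0\<bar>" and "z $ l0 \<noteq> 0"
    and small: "\<And>l. l \<noteq> l0 \<Longrightarrow> \<bar>w $ l\<bar> \<le> \<rho>"
  shows "\<bar>w $ l0\<bar> \<le> real (CARD('n) - 1) * \<rho>"
proof -
  have "0 = (\<Sum>l\<in>UNIV. w $ l * z $ l)" using assms(1) by (simp add: inner_vec_def)
  also have "\<dots> = w $ l0 * z $ l0 + (\<Sum>l\<in>UNIV - {l0}. w $ l * z $ l)"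
    by (simp add: sum.remove)
  finally have "w $ l0 * z $ l0 = - (\<Sum>l\<in>UNIV - {l0}. w $ l * z $ l)" by linarith
  then have "\<bar>w $ l0\<bar> * \<bar>z $ l0\<bar> = \<bar>\<Sum>l\<in>UNIV - {l0}. w $ l * z $ l\<bar>"
    by (metis abs_minus_cancel abs_mult)
  also have "\<dots> \<le> (\<Sum>l\<in>UNIV - {l0}. \<rho> * \<bar>z $ l0\<bar>)"
  proof (rule order.trans[OF sum_abs sum_mono])
    fix l assume "l \<in> UNIV - {l0}"
    then have "\<bar>w $ l\<bar> \<le> \<rho>" using small by blast
    then show "\<bar>w $ l * z $ l\<bar> \<le> \<rho> * \<bar>z $ l0\<bar>"
      unfolding abs_mult using max[of l] by (intro mult_mono) auto
  qed
  also have "\<dots> = real (CARD('n) - 1) * \<rho> * \<bar>z $ l0\<bar>"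
    by simp
  finally show ?thesis using assms(3) by simp
qed

section \<open>The lattices and their duals\<close>

definition int_vec :: "real^'n \<Rightarrow> bool" where
  "int_vec v \<longleftrightarrow> (\<forall>l. v $ l \<in> \<int>)"

text \<open>For \<open>J \<subseteq> {1..d}\<close> and weights \<open>N\<close>, the points \<open>lattice_point \<alpha> J N v\<close>, \<open>v \<in> \<int>\<^sup>d\<^sup>+\<^sup>1\<close>, form a
  unimodular lattice in the coordinates \<open>J \<union> {None}\<close> (the others vanish); the points
  \<open>dual_point \<alpha> J N p q\<close> form its dual lattice.\<close>

definition lattice_point ::
    "real^'d \<Rightarrow> 'd set \<Rightarrow> ('d \<Rightarrow> real) \<Rightarrow> real^('d::finite option) \<Rightarrow> real^('d option)" where
  "lattice_point \<alpha> J N v = (\<chi> l. case l of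
      Some i \<Rightarrow> if i \<in> J then v $ Some i / N i else 0
    | None \<Rightarrow> ((\<Sum>i\<in>J. v $ Some i * \<alpha> $ i) + v $ None) * prod N J)"

definition dual_point ::
    "real^'d \<Rightarrow> 'd set \<Rightarrow> ('d \<Rightarrow> real) \<Rightarrow> ('d \<Rightarrow> int) \<Rightarrow> int \<Rightarrow> real^('d::finite option)" where
  "dual_point \<alpha> J N p q = (\<chi> l. case l of
      Some i \<Rightarrow> if i \<in> J then (of_int (p i) - of_int q * \<alpha> $ i) * N i else 0
    | None \<Rightarrow> of_int q / prod N J)"

lemma lattice_point_Some [simp]:
  "lattice_point \<alpha> J N v $ Some i = (if i \<in> J then v $ Some i / N i else 0)"
  by (simp add: lattice_point_def)

lemma lattice_point_None [simp]:
  "lattice_point \<alpha> J N v $ None = ((\<Sum>i\<in>J. v $ Some i * \<alpha> $ i) + v $ None) * prod N J"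
  by (simp add: lattice_point_def)

lemma dual_point_Some [simp]:
  "dual_point \<alpha> J N p q $ Some i = (if i \<in> J then (of_int (p i) - of_int q * \<alpha> $ i) * N i else 0)"
  by (simp add: dual_point_def)

lemma dual_point_None [simp]: "dual_point \<alpha> J N p q $ None = of_int q / prod N J"
  by (simp add: dual_point_def)

lemma linear_lattice_point:
  fixes \<alpha> :: "real^'d::finite"
  shows "linear (lattice_point \<alpha> J N)"
proof (rule linearI)
  fix v w :: "real^'d::finite option" and c :: real
  show "lattice_point \<alpha> J N (v + w) = lattice_point \<alpha> J N v + lattice_point \<alpha> J N w"
  proof (unfold vec_eq_iff, intro allI)
    fix l show "lattice_point \<alpha> J N (v + w) $ l = (lattice_point \<alpha> J N v + lattice_point \<alpha> J N w) $ l"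
      by (cases l) (auto simp: add_divide_distrib sum.distrib algebra_simps)
  qed
  show "lattice_point \<alpha> J N (c *\<^sub>R v) = c *\<^sub>R lattice_point \<alpha> J N v"
  proof (unfold vec_eq_iff, intro allI)
    fix l show "lattice_point \<alpha> J N (c *\<^sub>R v) $ l = (c *\<^sub>R lattice_point \<alpha> J N v) $ l"
      by (cases l) (auto simp: sum_distrib_left algebra_simps)
  qed
qed

lemma sum_UNIV_option:
  fixes f :: "'a::finite option \<Rightarrow> 'b::comm_monoid_add"
  shows "(\<Sum>l\<in>UNIV. f l) = f None + (\<Sum>i\<in>UNIV. f (Some i))"
proof -
  have "(\<Sum>l\<in>UNIV. f l) = f None + (\<Sum>l\<in>range Some. f l)"
    unfolding UNIV_option_conv by (rule sum.insert) auto
  also have "(\<Sum>l\<in>range Some. f l) = (\<Sum>i\<in>UNIV. f (Some i))"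
    by (subst sum.reindex) (auto simp: inj_on_def)
  finally show ?thesis .
qed

lemma inner_dual_point:
  "inner (dual_point \<alpha> J N p q) z
     = (\<Sum>i\<in>J. ((of_int (p i) - of_int q * \<alpha> $ i) * N i) * z $ Some i) + (of_int q / prod N J) * z $ None"
proof -
  have "(\<Sum>i\<in>UNIV. dual_point \<alpha> J N p q $ Some i * z $ Some i)
      = (\<Sum>i\<in>J. ((of_int (p i) - of_int q * \<alpha> $ i) * N i) * z $ Some i)"
    by (rule sum.mono_neutral_cong_right) auto
  then show ?thesis by (simp add: inner_vec_def sum_UNIV_option)
qed

lemma inner_dual_point_lattice_point:
  assumes "\<forall>i\<in>J. N i \<noteq> 0"
  shows "inner (dual_point \<alpha> J N p q) (lattice_point \<alpha> J N v)
           = (\<Sum>i\<in>J. of_int (p i) * v $ Some i) + of_int q * v $ None"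
proof -
  have "(\<Sum>i\<in>J. ((of_int (p i) - of_int q * \<alpha> $ i) * N i) * lattice_point \<alpha> J N v $ Some i)
      = (\<Sum>i\<in>J. of_int (p i) * v $ Some i - of_int q * (v $ Some i * \<alpha> $ i))"
    using assms by (intro sum.cong) (auto simp: field_simps)
  also have "\<dots> = (\<Sum>i\<in>J. of_int (p i) * v $ Some i) - of_int q * (\<Sum>i\<in>J. v $ Some i * \<alpha> $ i)"
    by (simp add: sum_subtractf sum_distrib_left)
  moreover have "prod N J \<noteq> 0" using assms by simp
  ultimately show ?thesis unfolding inner_dual_point by (simp add: algebra_simps)
qed

lemma int_pairing_Ints:
  "int_vec v \<Longrightarrow> (\<Sum>i\<in>J. of_int (p i) * v $ Some i) + of_int (q::int) * v $ None \<in> \<int>"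
  unfolding int_vec_def by (intro Ints_add Ints_sum Ints_mult) auto

section \<open>Transference\<close>

text \<open>The product of the coordinates of a dual point is \<open>\<bar>q\<bar> \<Prod>\<^sub>i \<bar>p\<^sub>i - q \<alpha>\<^sub>i\<bar>\<close>, so the badly
  approximable hypothesis keeps nonzero dual points out of a small cube.\<close>

lemma dual_point_large_component:
  fixes \<alpha> :: "real^'d"
  assumes bad: "\<And>q::int. q \<noteq> 0 \<Longrightarrow> c \<le> \<bar>of_int q\<bar> * (\<Prod>i\<in>J. dZ (of_int q * \<alpha> $ i))"
    and N: "\<forall>i\<in>J. N i \<ge> 1" and nz: "q \<noteq> 0 \<or> (\<exists>i\<in>J. p i \<noteq> 0)"
    and B: "0 \<le> B" "B < 1" "B < c"
  shows "\<exists>l. B < \<bar>dual_point \<alpha> J N p q $ l\<bar>"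
proof (rule ccontr)
  assume "\<nexists>l. B < \<bar>dual_point \<alpha> J N p q $ l\<bar>"
  then have small: "\<bar>dual_point \<alpha> J N p q $ l\<bar> \<le> B" for l by (simp add: not_less)
  have Npos: "N i > 0" if "i \<in> J" for i using N that by fastforce
  have P: "prod N J > 0" using Npos by (simp add: prod_pos)
  show False
  proof (cases "q = 0")
    case True
    then obtain i where i: "i \<in> J" "p i \<noteq> 0" using nz by blast
    then have "1 * 1 \<le> \<bar>of_int (p i)\<bar> * N i" using N by (intro mult_mono) auto
    then show False using small[of "Some i"] i True B(2) Npos[OF i(1)] by (simp add: abs_mult)
  next
    case False
    have "dZ (of_int q * \<alpha> $ i) \<le> B / N i" if "i \<in> J" for i
    proof -
      have "dZ (of_int q * \<alpha> $ i) \<le> \<bar>of_int (p i) - of_int q * \<alpha> $ i\<bar>"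
        using dZ_le[of "of_int (p i)" "of_int q * \<alpha> $ i"] by (simp add: abs_minus_commute)
      also have "\<dots> \<le> B / N i"
        using small[of "Some i"] that Npos[OF that] by (simp add: abs_mult pos_le_divide_eq)
      finally show ?thesis .
    qed
    then have "(\<Prod>i\<in>J. dZ (of_int q * \<alpha> $ i)) \<le> (\<Prod>i\<in>J. B / N i)"
      by (intro prod_mono) (simp add: dZ_nonneg)
    also have "\<dots> = B ^ card J / prod N J" by (simp add: prod_dividef)
    finally have prod_dZ: "(\<Prod>i\<in>J. dZ (of_int q * \<alpha> $ i)) \<le> B ^ card J / prod N J" .
    have q: "\<bar>of_int q\<bar> \<le> B * prod N J"
      using small[of None] P by (simp add: abs_divide pos_divide_le_eq)
    have "c \<le> \<bar>of_int q\<bar> * (\<Prod>i\<in>J. dZ (of_int q * \<alpha> $ i))" using bad[OF False] .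
    also have "\<dots> \<le> (B * prod N J) * (B ^ card J / prod N J)"
      using q prod_dZ B(1) by (intro mult_mono) (auto intro: prod_nonneg dZ_nonneg)
    also have "\<dots> = B * B ^ card J"
    proof -
      define PN where "PN = prod N J"
      have "PN \<noteq> 0" using P unfolding PN_def by linarith
      then show ?thesis unfolding PN_def[symmetric] by simp
    qed
    also have "\<dots> \<le> B" using B by (simp add: mult_left_le power_le_one)
    finally show False using B by linarith
  qed
qed

lemma dual_point_diff:
  "dual_point \<alpha> J N (\<lambda>i. p i - p' i) (q - q') = dual_point \<alpha> J N p q - dual_point \<alpha> J N p' q'"
proof (unfold vec_eq_iff, intro allI)
  fix l show "dual_point \<alpha> J N (\<lambda>i. p i - p' i) (q - q') $ l
      = (dual_point \<alpha> J N p q - dual_point \<alpha> J N p' q') $ l"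
    by (cases l) (simp_all add: diff_divide_distrib algebra_simps)
qed

lemma abs_round_diff_mult_le:
  fixes x n :: real
  assumes "0 \<le> n"
  shows "\<bar>(of_int (round x) - x) * n\<bar> \<le> n / 2"
proof -
  have "\<bar>of_int (round x) - x\<bar> * n \<le> 1/2 * n"
    using of_int_round_abs_le[of x] assms by (intro mult_right_mono) auto
  then show ?thesis using assms by (simp add: abs_mult)
qed

lemma abs_inner_le_sum_abs:
  fixes w z :: "real^'n"
  assumes "\<And>l. \<bar>z $ l\<bar> \<le> \<delta>"
  shows "\<bar>inner w z\<bar> \<le> (\<Sum>l\<in>UNIV. \<bar>w $ l\<bar>) * \<delta>"
  unfolding inner_vec_def sum_distrib_right
  by (rule order.trans[OF sum_abs sum_mono]) (simp add: abs_mult assms mult_left_mono)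

lemma sum_abs_dual_point:
  "(\<Sum>l\<in>UNIV. \<bar>dual_point \<alpha> J N p q $ l\<bar>)
     = \<bar>of_int q / prod N J\<bar> + (\<Sum>i\<in>J. \<bar>dual_point \<alpha> J N p q $ Some i\<bar>)"
proof -
  have "(\<Sum>i\<in>UNIV. \<bar>dual_point \<alpha> J N p q $ Some i\<bar>) = (\<Sum>i\<in>J. \<bar>dual_point \<alpha> J N p q $ Some i\<bar>)"
    by (rule sum.mono_neutral_right) auto
  then show ?thesis unfolding sum_UNIV_option by simp
qed

lemma prod_div_add_one_le:
  fixes N :: "'a \<Rightarrow> real"
  assumes "0 < \<rho>" "\<rho> \<le> 1" and N: "\<And>i. i \<in> A \<Longrightarrow> 1 \<le> N i"
  shows "(\<Prod>i\<in>A. N i / \<rho> + 1) \<le> (2 / \<rho>) ^ card A * prod N A"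
proof -
  have "(\<Prod>i\<in>A. N i / \<rho> + 1) \<le> (\<Prod>i\<in>A. 2 / \<rho> * N i)"
  proof (intro prod_mono conjI)
    fix i assume "i \<in> A"
    then have "1 \<le> N i / \<rho>" using N[of i] assms(1,2) by (simp add: field_simps)
    then show "0 \<le> N i / \<rho> + 1" "N i / \<rho> + 1 \<le> 2 / \<rho> * N i" by simp_all
  qed
  also have "\<dots> = (2 / \<rho>) ^ card A * prod N A" by (simp only: prod.distrib prod_constant)
  finally show ?thesis .
qed

text \<open>A Dirichlet-type construction: among the dual points with \<open>p\<^sub>i = round (q \<alpha>\<^sub>i)\<close>,
  \<open>0 \<le> q \<le> Q\<close>, two agree in their pairing with \<open>v\<close> and have close \<open>J\<close>-coordinates.\<close>

lemma exists_dual_point_orthogonal: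
  fixes \<alpha> :: "real^'d"
  assumes N: "\<forall>i\<in>J. N i \<ge> 1" and v: "int_vec v"
    and z: "\<And>l. \<bar>lattice_point \<alpha> J N v $ l\<bar> \<le> \<delta>" and "0 \<le> \<delta>"
    and \<rho>: "0 < \<rho>" "\<rho> \<le> 1" and \<delta>: "4 * (2 / \<rho>) ^ card J * \<delta> \<le> 1"
  shows "\<exists>p q. q \<noteq> 0 \<and> (\<Sum>i\<in>J. of_int (p i) * v $ Some i) + of_int q * v $ None = 0
           \<and> (\<forall>i\<in>J. \<bar>dual_point \<alpha> J N p q $ Some i\<bar> < \<rho>)"
proof -
  define a where "a = (2 / \<rho>) ^ card J"
  define P where "P = prod N J"
  define S where "S = (\<Sum>i\<in>J. N i)"
  define Q where "Q = \<lceil>2 * a * P * (2 * \<delta> * S + 1)\<rceil>"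
  define pr where "pr q i = round (of_int q * \<alpha> $ i)" for q :: int and i
  define G where "G q = (\<Sum>i\<in>J. of_int (pr q i) * v $ Some i) + of_int q * v $ None" for q
  define Gm where "Gm = \<delta> * (S + of_int Q / P)"
  have Npos: "N i > 0" if "i \<in> J" for i using N that by fastforce
  have P: "P > 0" unfolding P_def using Npos by (simp add: prod_pos)
  have S: "S \<ge> 0" unfolding S_def using Npos by (simp add: sum_nonneg less_imp_le)
  have "a > 0" unfolding a_def using \<rho> by simp
  have Qge: "of_int Q \<ge> 2 * a * P * (2 * \<delta> * S + 1)" unfolding Q_def by (rule le_of_int_ceiling)
  have "0 \<le> 2 * a * P * (2 * \<delta> * S + 1)" using \<open>a > 0\<close> P S \<open>0 \<le> \<delta>\<close> by simp
  then have Q: "Q \<ge> 0" using Qge by linarith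
  have dual_Some: "\<bar>dual_point \<alpha> J N (pr q) q $ Some i\<bar> \<le> N i / 2" if "i \<in> J" for q i
    using abs_round_diff_mult_le[of "N i"] Npos[OF that] that by (simp add: pr_def)
  have G_bound: "\<bar>G q\<bar> \<le> Gm" if "q \<in> {0..Q}" for q
  proof -
    have "\<forall>i\<in>J. N i \<noteq> 0" using Npos by fastforce
    then have "G q = inner (dual_point \<alpha> J N (pr q) q) (lattice_point \<alpha> J N v)"
      unfolding G_def by (simp add: inner_dual_point_lattice_point)
    also have "\<bar>\<dots>\<bar> \<le> (\<bar>of_int q / P\<bar> + (\<Sum>i\<in>J. \<bar>dual_point \<alpha> J N (pr q) q $ Some i\<bar>)) * \<delta>"
      using abs_inner_le_sum_abs[OF z, of "dual_point \<alpha> J N (pr q) q"]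
      unfolding sum_abs_dual_point P_def .
    also have "\<dots> \<le> (of_int Q / P + S) * \<delta>"
    proof (intro mult_right_mono add_mono)
      show "\<bar>of_int q / P\<bar> \<le> of_int Q / P" using that P by (simp add: divide_right_mono)
      show "(\<Sum>i\<in>J. \<bar>dual_point \<alpha> J N (pr q) q $ Some i\<bar>) \<le> S"
        unfolding S_def
      proof (rule sum_mono)
        fix i assume "i \<in> J"
        from dual_Some[OF this, of q] Npos[OF this]
        show "\<bar>dual_point \<alpha> J N (pr q) q $ Some i\<bar> \<le> N i" by linarith
      qed
    qed (use \<open>0 \<le> \<delta>\<close> in simp)
    finally show ?thesis unfolding Gm_def by (simp add: mult.commute add.commute)
  qed
  have Gm: "Gm \<ge> 0" unfolding Gm_def using \<open>0 \<le> \<delta>\<close> S Q P by simp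
  define K where "K = insert None (Some ` J)"
  define \<phi> where "\<phi> q \<kappa> = (case \<kappa> of None \<Rightarrow> G q | Some i \<Rightarrow> dual_point \<alpha> J N (pr q) q $ Some i)"
    for q \<kappa>
  define lo where "lo \<kappa> = (case \<kappa> of None \<Rightarrow> - Gm | Some i \<Rightarrow> - N i / 2)" for \<kappa> :: "'d option"
  define hi where "hi \<kappa> = (case \<kappa> of None \<Rightarrow> Gm | Some i \<Rightarrow> N i / 2)" for \<kappa> :: "'d option"
  define w where "w \<kappa> = (case \<kappa> of None \<Rightarrow> 1 | Some i \<Rightarrow> \<rho>)" for \<kappa> :: "'d option"
  have "(\<Prod>\<kappa>\<in>K. (hi \<kappa> - lo \<kappa>) / w \<kappa> + 1) < real (card {0..Q})"
  proof -
    have "(\<Prod>\<kappa>\<in>K. (hi \<kappa> - lo \<kappa>) / w \<kappa> + 1) = (2 * Gm + 1) * (\<Prod>i\<in>J. N i / \<rho> + 1)"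
      unfolding K_def by (simp add: prod.reindex hi_def lo_def w_def)
    also have "\<dots> \<le> (2 * Gm + 1) * (a * P)"
      unfolding a_def P_def using Gm \<rho> N by (intro mult_left_mono prod_div_add_one_le) auto
    also have "(2 * Gm + 1) * (a * P) = a * P * (2 * \<delta> * S + 1) + 4 * a * \<delta> * of_int Q / 2"
      unfolding Gm_def using P by (simp add: field_simps)
    also have "\<dots> \<le> of_int Q / 2 + of_int Q / 2"
    proof (rule add_mono)
      show "a * P * (2 * \<delta> * S + 1) \<le> of_int Q / 2" using Qge by linarith
      have "(4 * a * \<delta>) * of_int Q \<le> 1 * of_int Q"
        using \<delta> Q unfolding a_def by (intro mult_right_mono) auto
      then show "4 * a * \<delta> * of_int Q / 2 \<le> of_int Q / 2" by (simp add: mult_ac)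

    qed
    also have "\<dots> < real (card {0..Q})" using Q by simp
    finally show ?thesis .
  qed
  then have "\<exists>q1\<in>{0..Q}. \<exists>q2\<in>{0..Q}. q1 \<noteq> q2 \<and> (\<forall>\<kappa>\<in>K. \<bar>\<phi> q1 \<kappa> - \<phi> q2 \<kappa>\<bar> < w \<kappa>)"
  proof (rule box_pigeonhole[rotated 5])
    fix q \<kappa> assume q: "q \<in> {0..Q}" and "\<kappa> \<in> K"
    then consider "\<kappa> = None" | i where "\<kappa> = Some i" "i \<in> J" unfolding K_def by blast
    then show "lo \<kappa> \<le> \<phi> q \<kappa> \<and> \<phi> q \<kappa> \<le> hi \<kappa>"
    proof cases
      case 1
      then show ?thesis using G_bound[OF q] unfolding lo_def hi_def \<phi>_def by (simp add: abs_le_iff)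
    next
      case 2
      then show ?thesis using dual_Some[OF 2(2), of q]
        unfolding abs_le_iff lo_def hi_def \<phi>_def 2(1) option.case by linarith
    qed
  next
    fix \<kappa> assume "\<kappa> \<in> K"
    then show "w \<kappa> > 0" "lo \<kappa> \<le> hi \<kappa>"
      using \<rho> Gm Npos unfolding K_def w_def lo_def hi_def by (auto simp: less_imp_le)
  qed (simp_all add: K_def)
  then obtain q1 q2 where q12: "q1 \<noteq> q2" and close: "\<And>\<kappa>. \<kappa> \<in> K \<Longrightarrow> \<bar>\<phi> q1 \<kappa> - \<phi> q2 \<kappa>\<bar> < w \<kappa>"
    by blast
  define p where "p i = pr q1 i - pr q2 i" for i
  have "\<bar>G q1 - G q2\<bar> < 1" using close[of None] unfolding K_def \<phi>_def w_def by simp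
  moreover have "G q1 - G q2 = (\<Sum>i\<in>J. of_int (p i) * v $ Some i) + of_int (q1 - q2) * v $ None"
    unfolding G_def p_def by (simp add: algebra_simps sum_subtractf)
  ultimately have "(\<Sum>i\<in>J. of_int (p i) * v $ Some i) + of_int (q1 - q2) * v $ None = 0"
    using int_pairing_Ints[OF v] Ints_nonzero_abs_less1 by metis
  moreover have "\<bar>dual_point \<alpha> J N p (q1 - q2) $ Some i\<bar> < \<rho>" if "i \<in> J" for i
    using close[of "Some i"] that dual_point_diff[of \<alpha> J N "pr q1" "pr q2" q1 q2]
    unfolding K_def \<phi>_def w_def p_def by simp
  ultimately show ?thesis using q12 by (intro exI[of _ p] exI[of _ "q1 - q2"]) auto
qed

lemma box_count_estimate:
  fixes b \<delta> \<rho> S T n :: real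
  assumes "0 < b" "0 \<le> \<delta>" "0 < \<rho>" "32 * b * \<delta> \<le> \<rho>" "0 \<le> S" "S + 4 * b / \<rho> \<le> T" "1 \<le> n"
  shows "2 * b * (2 * (\<delta> * (S + (T + 1) * n + 1)) + 1) \<le> \<rho> * (T + 1) * n"
proof -
  have "0 \<le> 4 * b / \<rho>" using assms by simp
  then have T: "0 \<le> T" "S \<le> T" using assms by linarith+
  have Tn: "T + 1 \<le> (T + 1) * n" using mult_left_mono[of 1 n "T + 1"] T assms(7) by simp
  then have "S + (T + 1) * n + 1 \<le> 3 * ((T + 1) * n)" using T by linarith
  from mult_left_mono[OF this, of "4 * b * \<delta>"] assms(1,2)
  have "2 * b * (2 * (\<delta> * (S + (T + 1) * n + 1))) \<le> 12 * b * \<delta> * ((T + 1) * n)"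
    by (simp add: mult_ac)
  also have "\<dots> \<le> 3 / 8 * \<rho> * ((T + 1) * n)"
  proof (rule mult_right_mono)
    show "12 * b * \<delta> \<le> 3 / 8 * \<rho>" using assms(4) by linarith
  qed (use T assms(7) in simp)
  finally have A: "2 * b * (2 * (\<delta> * (S + (T + 1) * n + 1))) \<le> 3 / 8 * (\<rho> * (T + 1) * n)" by simp
  have "4 * b / \<rho> \<le> T + 1" using assms(5,6) by linarith
  then have "4 * b \<le> \<rho> * (T + 1)" using assms(3) by (simp add: pos_divide_le_eq mult.commute)
  also have "\<dots> \<le> \<rho> * (T + 1) * n"
    using Tn assms(3) mult_left_mono[of "T + 1" "(T + 1) * n" \<rho>] by (simp add: mult.assoc)
  finally have "2 * b \<le> 1 / 2 * (\<rho> * (T + 1) * n)" by simp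
  moreover have "0 \<le> \<rho> * (T + 1) * n" using assms(3,7) T by simp
  ultimately show ?thesis using A by (simp add: algebra_simps)
qed

text \<open>The same construction, with an extra integer shift \<open>0 \<le> t \<le> T\<close> of \<open>p\<^sub>i\<^sub>0\<close>; here only
  the coordinates other than \<open>i0\<close> are made small.\<close>

lemma exists_dual_point_orthogonal_except:
  fixes \<alpha> :: "real^'d"
  assumes N: "\<forall>i\<in>J. N i \<ge> 1" and v: "int_vec v"
    and z: "\<And>l. \<bar>lattice_point \<alpha> J N v $ l\<bar> \<le> \<delta>" and "0 \<le> \<delta>"
    and \<rho>: "0 < \<rho>" "\<rho> \<le> 1" and i0: "i0 \<in> J" and \<delta>: "32 * (2 / \<rho>) ^ (card J - 1) * \<delta> \<le> \<rho>"
  shows "\<exists>p q. (q \<noteq> 0 \<or> p i0 \<noteq> 0) \<and> (\<Sum>i\<in>J. of_int (p i) * v $ Some i) + of_int q * v $ None = 0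
           \<and> (\<forall>i\<in>J - {i0}. \<bar>dual_point \<alpha> J N p q $ Some i\<bar> < \<rho>)
           \<and> \<bar>dual_point \<alpha> J N p q $ None\<bar> < \<rho>"
proof -
  define b where "b = (2 / \<rho>) ^ (card J - 1)"
  define P where "P = prod N J"
  define S where "S = (\<Sum>i\<in>J. N i)"
  define Q where "Q = \<lfloor>\<rho> * P\<rfloor>"
  define T where "T = \<lceil>S + 4 * b / \<rho>\<rceil>"
  define pr where "pr x i = round (of_int (fst x) * \<alpha> $ i) + (if i = i0 then snd x else 0)"
    for x :: "int \<times> int" and i
  define G where "G x = (\<Sum>i\<in>J. of_int (pr x i) * v $ Some i) + of_int (fst x) * v $ None" for x
  define Gm where "Gm = \<delta> * (S + (of_int T + 1) * N i0 + 1)"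
  define X where "X = {0..Q} \<times> {0..T}"
  have Npos: "N i > 0" if "i \<in> J" for i using N that by fastforce
  have P: "P > 0" unfolding P_def using Npos by (simp add: prod_pos)
  have S: "S \<ge> 0" unfolding S_def using Npos by (simp add: sum_nonneg less_imp_le)
  have "b > 0" unfolding b_def using \<rho> by simp
  have QP: "of_int Q \<le> \<rho> * P" "\<rho> * P < of_int Q + 1" unfolding Q_def by linarith+
  have Q: "Q \<ge> 0" unfolding Q_def using \<rho> P by simp
  have T: "of_int T \<ge> S + 4 * b / \<rho>" unfolding T_def by (rule le_of_int_ceiling)
  have "0 \<le> 4 * b / \<rho>" using \<open>b > 0\<close> \<rho> by simp
  then have T0: "T \<ge> 0" and ST: "S \<le> of_int T" using T S by linarith+
  have N0: "1 \<le> N i0" using N i0 by blast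
  have X: "0 \<le> fst x" "of_int (fst x) \<le> \<rho> * P" "0 \<le> snd x" "snd x \<le> T" if "x \<in> X" for x
    using that QP(1) unfolding X_def by (auto simp: mem_Times_iff)
  have dual_Some: "\<bar>dual_point \<alpha> J N (pr x) (fst x) $ Some i\<bar> \<le> N i / 2" if "i \<in> J" "i \<noteq> i0" for x i
    using abs_round_diff_mult_le[of "N i"] Npos[OF that(1)] that by (simp add: pr_def)
  have dual_i0: "\<bar>dual_point \<alpha> J N (pr x) (fst x) $ Some i0\<bar> \<le> (of_int T + 1) * N i0" if "x \<in> X" for x
  proof -
    have "dual_point \<alpha> J N (pr x) (fst x) $ Some i0
        = (of_int (round (of_int (fst x) * \<alpha> $ i0)) - of_int (fst x) * \<alpha> $ i0) * N i0 + of_int (snd x) * N i0"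
      using i0 by (simp add: pr_def algebra_simps)
    also have "\<bar>\<dots>\<bar> \<le> N i0 / 2 + of_int T * N i0"
      using abs_round_diff_mult_le[of "N i0"] N0 X[OF that]
      by (intro order.trans[OF abs_triangle_ineq add_mono]) (auto simp: abs_mult mult_right_mono)
    also have "\<dots> \<le> (of_int T + 1) * N i0" using N0 by (simp add: algebra_simps)
    finally show ?thesis .
  qed
  have G_bound: "\<bar>G x\<bar> \<le> Gm" if "x \<in> X" for x
  proof -
    have "\<forall>i\<in>J. N i \<noteq> 0" using Npos by fastforce
    then have "G x = inner (dual_point \<alpha> J N (pr x) (fst x)) (lattice_point \<alpha> J N v)"
      unfolding G_def by (simp add: inner_dual_point_lattice_point)
    also have "\<bar>\<dots>\<bar> \<le> (\<bar>of_int (fst x) / P\<bar> + (\<Sum>i\<in>J. \<bar>dual_point \<alpha> J N (pr x) (fst x) $ Some i\<bar>)) * \<delta>"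
      using abs_inner_le_sum_abs[OF z, of "dual_point \<alpha> J N (pr x) (fst x)"]
      unfolding sum_abs_dual_point P_def .
    also have "\<dots> \<le> (1 + (\<Sum>i\<in>J. N i + (if i = i0 then (of_int T + 1) * N i0 else 0))) * \<delta>"
    proof (intro mult_right_mono add_mono sum_mono)
      have "\<rho> * P \<le> 1 * P" using \<rho> P by (intro mult_right_mono) auto
      then have "of_int (fst x) \<le> 1 * P" using X(2)[OF that] by linarith
      then have "of_int (fst x) / P \<le> 1" using P by (simp add: field_simps)
      then show "\<bar>of_int (fst x) / P\<bar> \<le> 1" using X(1)[OF that] P by simp
      fix i assume i: "i \<in> J"
      show "\<bar>dual_point \<alpha> J N (pr x) (fst x) $ Some i\<bar> \<le> N i + (if i = i0 then (of_int T + 1) * N i0 else 0)"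
      proof (cases "i = i0")
        case True
        then show ?thesis using dual_i0[OF that] Npos[OF i] by simp
      next
        case False
        then show ?thesis using dual_Some[OF i False, of x] Npos[OF i] by simp
      qed
    qed (use \<open>0 \<le> \<delta>\<close> in simp)
    also have "\<dots> = Gm"
      unfolding Gm_def S_def sum.distrib using i0 by (simp add: algebra_simps)
    finally show ?thesis .
  qed
  have Gm: "Gm \<ge> 0" unfolding Gm_def using \<open>0 \<le> \<delta>\<close> S T0 N0 by simp
  define K where "K = insert None (Some ` J)"
  define \<phi> where "\<phi> x \<kappa> = (case \<kappa> of None \<Rightarrow> of_int (fst x) / P
      | Some i \<Rightarrow> if i = i0 then G x else dual_point \<alpha> J N (pr x) (fst x) $ Some i)" for x \<kappa>
  define lo where "lo \<kappa> = (case \<kappa> of None \<Rightarrow> 0 | Some i \<Rightarrow> if i = i0 then - Gm else - N i / 2)"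
    for \<kappa> :: "'d option"
  define hi where "hi \<kappa> = (case \<kappa> of None \<Rightarrow> \<rho> | Some i \<Rightarrow> if i = i0 then Gm else N i / 2)"
    for \<kappa> :: "'d option"
  define w where "w \<kappa> = (case \<kappa> of None \<Rightarrow> \<rho> | Some i \<Rightarrow> if i = i0 then 1 else \<rho>)"
    for \<kappa> :: "'d option"
  have "(\<Prod>\<kappa>\<in>K. (hi \<kappa> - lo \<kappa>) / w \<kappa> + 1) < real (card X)"
  proof -
    have factors: "(\<Prod>i\<in>J - {i0}. (hi (Some i) - lo (Some i)) / w (Some i) + 1) = (\<Prod>i\<in>J - {i0}. N i / \<rho> + 1)"
      "((hi None - lo None) / w None + 1) * ((hi (Some i0) - lo (Some i0)) / w (Some i0) + 1)
        = 2 * (2 * Gm + 1)"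
      unfolding hi_def lo_def w_def using \<rho> by (auto intro: prod.cong)
    have "(\<Prod>\<kappa>\<in>K. (hi \<kappa> - lo \<kappa>) / w \<kappa> + 1)
        = ((hi None - lo None) / w None + 1) * ((hi (Some i0) - lo (Some i0)) / w (Some i0) + 1)
          * (\<Prod>i\<in>J - {i0}. (hi (Some i) - lo (Some i)) / w (Some i) + 1)"
      unfolding K_def using i0 by (simp add: prod.reindex prod.remove[of J i0])
    also have "\<dots> = 2 * (2 * Gm + 1) * (\<Prod>i\<in>J - {i0}. N i / \<rho> + 1)"
      by (simp only: factors)
    also have "\<dots> \<le> 2 * (2 * Gm + 1) * ((2 / \<rho>) ^ card (J - {i0}) * prod N (J - {i0}))"
      using Gm \<rho> N by (intro mult_left_mono prod_div_add_one_le) auto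
    also have "(2 / \<rho>) ^ card (J - {i0}) * prod N (J - {i0}) = b * (P / N i0)"
      using i0 Npos[OF i0] unfolding b_def P_def by (simp add: prod.remove[of J i0])
    also have "2 * (2 * Gm + 1) * (b * (P / N i0)) = (2 * b * (2 * Gm + 1)) * (P / N i0)"
      by (simp add: algebra_simps)
    also have "\<dots> \<le> (\<rho> * (of_int T + 1) * N i0) * (P / N i0)"
      using box_count_estimate[OF \<open>b > 0\<close> \<open>0 \<le> \<delta>\<close> \<rho>(1) _ S T N0] \<delta> P Npos[OF i0]
      unfolding Gm_def b_def by (intro mult_right_mono) (simp_all add: mult.assoc)
    also have "\<dots> = \<rho> * P * (of_int T + 1)" using Npos[OF i0] by simp
    also have "\<dots> < (of_int Q + 1) * (of_int T + 1)"
      using QP T0 by (intro mult_strict_right_mono) auto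
    also have "\<dots> = real (card X)" unfolding X_def using Q T0 by (simp add: card_cartesian_product)
    finally show ?thesis .
  qed
  then have "\<exists>x1\<in>X. \<exists>x2\<in>X. x1 \<noteq> x2 \<and> (\<forall>\<kappa>\<in>K. \<bar>\<phi> x1 \<kappa> - \<phi> x2 \<kappa>\<bar> < w \<kappa>)"
  proof (rule box_pigeonhole[rotated 5])
    fix x \<kappa> assume x: "x \<in> X" and "\<kappa> \<in> K"
    then consider "\<kappa> = None" | "\<kappa> = Some i0" | i where "\<kappa> = Some i" "i \<in> J" "i \<noteq> i0"
      unfolding K_def by blast
    then show "lo \<kappa> \<le> \<phi> x \<kappa> \<and> \<phi> x \<kappa> \<le> hi \<kappa>"
    proof cases
      case 1
      then show ?thesis using x QP P unfolding X_def lo_def hi_def \<phi>_def by (auto simp: field_simps)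
    next
      case 2
      then show ?thesis using G_bound[OF x] unfolding abs_le_iff lo_def hi_def \<phi>_def by simp
    next
      case 3
      then show ?thesis using dual_Some[OF 3(2,3), of x]
        unfolding abs_le_iff lo_def hi_def \<phi>_def 3(1) option.case if_not_P[OF 3(3)] by linarith
    qed
  next
    fix \<kappa> assume "\<kappa> \<in> K"
    then show "w \<kappa> > 0" "lo \<kappa> \<le> hi \<kappa>"
      using \<rho> Gm Npos unfolding K_def w_def lo_def hi_def by (auto simp: less_imp_le)
  qed (simp_all add: K_def X_def)
  then obtain x1 x2 where x12: "x1 \<noteq> x2"
    and close: "\<And>\<kappa>. \<kappa> \<in> K \<Longrightarrow> \<bar>\<phi> x1 \<kappa> - \<phi> x2 \<kappa>\<bar> < w \<kappa>"
    by blast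
  define p where "p i = pr x1 i - pr x2 i" for i
  have dual_p: "dual_point \<alpha> J N p (fst x1 - fst x2)
      = dual_point \<alpha> J N (pr x1) (fst x1) - dual_point \<alpha> J N (pr x2) (fst x2)"
    unfolding p_def by (rule dual_point_diff)
  have "\<bar>G x1 - G x2\<bar> < 1" using close[of "Some i0"] i0 unfolding K_def \<phi>_def w_def by simp
  moreover have "G x1 - G x2 = (\<Sum>i\<in>J. of_int (p i) * v $ Some i) + of_int (fst x1 - fst x2) * v $ None"
    unfolding G_def p_def by (simp add: algebra_simps sum_subtractf)
  ultimately have "(\<Sum>i\<in>J. of_int (p i) * v $ Some i) + of_int (fst x1 - fst x2) * v $ None = 0"
    using int_pairing_Ints[OF v] Ints_nonzero_abs_less1 by metis
  moreover have "\<bar>dual_point \<alpha> J N p (fst x1 - fst x2) $ Some i\<bar> < \<rho>" if "i \<in> J - {i0}" for i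
    using close[of "Some i"] that unfolding dual_p K_def \<phi>_def w_def by simp
  moreover have "\<bar>dual_point \<alpha> J N p (fst x1 - fst x2) $ None\<bar> < \<rho>"
    using close[of None] unfolding dual_p K_def \<phi>_def w_def P_def by (simp add: diff_divide_distrib)
  moreover have "fst x1 - fst x2 \<noteq> 0 \<or> p i0 \<noteq> 0"
    using x12 unfolding p_def pr_def by (auto simp: prod_eq_iff)
  ultimately show ?thesis by blast
qed

text \<open>Transference: since the dual lattice avoids a small cube, so does the lattice. A short
  lattice point \<open>z\<close> would yield a dual point orthogonal to it with all coordinates small
  except the one where \<open>z\<close> is largest, and orthogonality makes that one small too.\<close>

lemma lattice_point_large_component:
  fixes \<alpha> :: "real^'d"
  assumes c: "c > 0"
    and bad: "\<And>q::int. q \<noteq> 0 \<Longrightarrow> c \<le> \<bar>of_int q\<bar> * (\<Prod>i\<in>J. dZ (of_int q * \<alpha> $ i))"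
  shows "\<exists>c1>0. \<forall>N v. (\<forall>i\<in>J. N i \<ge> 1) \<longrightarrow> int_vec v \<longrightarrow> lattice_point \<alpha> J N v \<noteq> 0 \<longrightarrow>
           (\<exists>l. c1 \<le> \<bar>lattice_point \<alpha> J N v $ l\<bar>)"
proof -
  define r where "r = min (1/2) (c/2)"
  define \<rho> where "\<rho> = r / (real CARD('d) + 1)"
  define c1 where "c1 = min (1 / (4 * (2 / \<rho>) ^ card J)) (\<rho> / (32 * (2 / \<rho>) ^ (card J - 1)))"
  have r: "0 < r" "r < 1" "r < c" unfolding r_def using c by auto
  have \<rho>: "0 < \<rho>" "\<rho> \<le> 1" "\<rho> \<le> r" "real CARD('d) * \<rho> < r"
    using r unfolding \<rho>_def by (auto simp: field_simps)
  have "c1 > 0" unfolding c1_def using \<rho> by simp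
  moreover have "\<exists>l. c1 \<le> \<bar>lattice_point \<alpha> J N v $ l\<bar>"
    if N: "\<forall>i\<in>J. N i \<ge> 1" and v: "int_vec v" and nz: "lattice_point \<alpha> J N v \<noteq> 0" for N v
  proof (rule ccontr)
    define z where "z = lattice_point \<alpha> J N v"
    assume "\<nexists>l. c1 \<le> \<bar>lattice_point \<alpha> J N v $ l\<bar>"
    then have small: "\<bar>z $ l\<bar> < c1" for l unfolding z_def by (simp add: not_le)
    obtain l0 where l0: "\<And>l. \<bar>z $ l\<bar> \<le> \<bar>z $ l0\<bar>" using exists_max_abs_component by blast
    define \<delta> where "\<delta> = \<bar>z $ l0\<bar>"
    have "z $ l0 \<noteq> 0"
    proof
      assume "z $ l0 = 0"
      then have "z $ l = 0" for l using l0[of l] by simp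
      then show False using nz unfolding z_def by (simp add: vec_eq_iff)
    qed
    have \<delta>: "0 \<le> \<delta>" "\<delta> < c1" using small[of l0] unfolding \<delta>_def by auto
    have "\<exists>p q. (q \<noteq> 0 \<or> (\<exists>i\<in>J. p i \<noteq> 0))
        \<and> (\<Sum>i\<in>J. of_int (p i) * v $ Some i) + of_int q * v $ None = 0
        \<and> (\<forall>l. l \<noteq> l0 \<longrightarrow> \<bar>dual_point \<alpha> J N p q $ l\<bar> \<le> \<rho>)"
    proof (cases l0)
      case None
      have "\<delta> \<le> 1 / (4 * (2 / \<rho>) ^ card J)" using \<delta>(2) unfolding c1_def by linarith
      then have "4 * (2 / \<rho>) ^ card J * \<delta> \<le> 1" using \<rho> by (simp add: pos_le_divide_eq mult.commute)
      then obtain p q where "q \<noteq> 0" "(\<Sum>i\<in>J. of_int (p i) * v $ Some i) + of_int q * v $ None = 0"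
        "\<forall>i\<in>J. \<bar>dual_point \<alpha> J N p q $ Some i\<bar> < \<rho>"
        using exists_dual_point_orthogonal[OF N v _ \<delta>(1) \<rho>(1,2)] l0 unfolding z_def \<delta>_def by blast
      moreover have "\<bar>dual_point \<alpha> J N p q $ l\<bar> \<le> \<rho>" if "l \<noteq> l0" "\<forall>i\<in>J. \<bar>dual_point \<alpha> J N p q $ Some i\<bar> < \<rho>" for l
        using that \<rho> None by (cases l) (auto simp: less_imp_le)
      ultimately show ?thesis by blast
    next
      case (Some i0)
      then have i0: "i0 \<in> J" using \<open>z $ l0 \<noteq> 0\<close> unfolding z_def by (auto split: if_splits)
      have "\<delta> \<le> \<rho> / (32 * (2 / \<rho>) ^ (card J - 1))" using \<delta>(2) unfolding c1_def by linarith
      then have "32 * (2 / \<rho>) ^ (card J - 1) * \<delta> \<le> \<rho>"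
        using \<rho> by (simp add: pos_le_divide_eq mult.commute)
      then obtain p q where "q \<noteq> 0 \<or> p i0 \<noteq> 0"
        "(\<Sum>i\<in>J. of_int (p i) * v $ Some i) + of_int q * v $ None = 0"
        "\<forall>i\<in>J - {i0}. \<bar>dual_point \<alpha> J N p q $ Some i\<bar> < \<rho>" "\<bar>dual_point \<alpha> J N p q $ None\<bar> < \<rho>"
        using exists_dual_point_orthogonal_except[OF N v _ \<delta>(1) \<rho>(1,2) i0] l0
        unfolding z_def \<delta>_def by blast
      moreover have "\<bar>dual_point \<alpha> J N p q $ l\<bar> \<le> \<rho>"
        if "l \<noteq> l0" "\<forall>i\<in>J - {i0}. \<bar>dual_point \<alpha> J N p q $ Some i\<bar> < \<rho>"
          "\<bar>dual_point \<alpha> J N p q $ None\<bar> < \<rho>" for l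
        using that \<rho> Some by (cases l) (auto simp: less_imp_le)
      ultimately show ?thesis using i0 by blast
    qed
    then obtain p q where nz_pq: "q \<noteq> 0 \<or> (\<exists>i\<in>J. p i \<noteq> 0)"
      and pairing: "(\<Sum>i\<in>J. of_int (p i) * v $ Some i) + of_int q * v $ None = 0"
      and off_l0: "\<And>l. l \<noteq> l0 \<Longrightarrow> \<bar>dual_point \<alpha> J N p q $ l\<bar> \<le> \<rho>"
      by blast
    have "\<forall>i\<in>J. N i \<noteq> 0" using N by fastforce
    then have "inner (dual_point \<alpha> J N p q) z = 0"
      using inner_dual_point_lattice_point[of J N \<alpha> p q v] pairing unfolding z_def by simp
    then have "\<bar>dual_point \<alpha> J N p q $ l0\<bar> \<le> real CARD('d) * \<rho>"
      using abs_component_le_if_inner_zero[OF _ l0 \<open>z $ l0 \<noteq> 0\<close> off_l0] by simp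
    then have "\<bar>dual_point \<alpha> J N p q $ l\<bar> \<le> r" for l
      using off_l0[of l] \<rho> by (cases "l = l0") auto
    moreover obtain l where "r < \<bar>dual_point \<alpha> J N p q $ l\<bar>"
      using dual_point_large_component[OF bad N nz_pq _ r(2,3)] r(1) by auto
    ultimately show False by (meson not_le)
  qed
  ultimately show ?thesis by blast
qed

section \<open>Covering radius\<close>

lemma exists_large_cluster:
  fixes h :: "'x \<Rightarrow> real"
  assumes "finite X" and h: "\<And>x. x \<in> X \<Longrightarrow> 0 \<le> h x \<and> h x \<le> H" and "0 \<le> H" "0 < \<epsilon>"
  shows "\<exists>F\<subseteq>X. real (card X) \<le> real (card F) * (H / \<epsilon> + 1) \<and> (\<forall>x\<in>F. \<forall>x'\<in>F. \<bar>h x - h x'\<bar> < \<epsilon>)"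
proof -
  define f where "f x = \<lfloor>h x / \<epsilon>\<rfloor>" for x
  define C where "C = {0..\<lfloor>H / \<epsilon>\<rfloor>}"
  have "f \<in> X \<rightarrow> C"
    using h \<open>0 < \<epsilon>\<close> unfolding f_def C_def by (auto intro!: floor_mono divide_right_mono)
  moreover have "C \<noteq> {}" "finite C" unfolding C_def using assms(3,4) by auto
  ultimately obtain y where "card X \<le> card (f -` {y} \<inter> X) * card C"
    using pigeonhole_card[OF _ \<open>finite X\<close>] by blast
  then have "real (card X) \<le> real (card (f -` {y} \<inter> X)) * real (card C)"
    by (simp only: of_nat_mult[symmetric] of_nat_le_iff)
  also have "\<dots> \<le> real (card (f -` {y} \<inter> X)) * (H / \<epsilon> + 1)"
    unfolding C_def using assms(3,4) by (intro mult_left_mono) auto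
  finally have "real (card X) \<le> real (card (f -` {y} \<inter> X)) * (H / \<epsilon> + 1)" .
  moreover have "\<bar>h x - h x'\<bar> < \<epsilon>" if "f x = f x'" for x x'
  proof -
    have "\<bar>h x / \<epsilon> - h x' / \<epsilon>\<bar> < 1" using that unfolding f_def by linarith
    then show ?thesis using \<open>0 < \<epsilon>\<close> by (simp add: diff_divide_distrib[symmetric] abs_divide)
  qed
  ultimately show ?thesis by (intro exI[of _ "f -` {y} \<inter> X"]) auto
qed

lemma card_int_box_ge:
  assumes "finite J" "\<And>i. i \<in> J \<Longrightarrow> 0 \<le> a i"
  shows "(\<Prod>i\<in>J. a i) \<le> real (card (PiE J (\<lambda>i. {0..\<lfloor>a i\<rfloor>})))"
proof -
  have "(\<Prod>i\<in>J. a i) \<le> (\<Prod>i\<in>J. real (nat (\<lfloor>a i\<rfloor> + 1)))"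
  proof (rule prod_mono)
    fix i assume "i \<in> J"
    then show "0 \<le> a i \<and> a i \<le> real (nat (\<lfloor>a i\<rfloor> + 1))" using assms(2)[of i] by linarith
  qed
  then show ?thesis using assms(1) by (simp add: card_PiE)
qed

text \<open>The points are differences of points \<open>lattice_point (k, s - \<lfloor>\<theta>\<^sub>k\<rfloor>)\<close>, \<open>0 \<le> k\<^sub>i \<le> R N\<^sub>i\<close>, \<open>0 \<le> s < u\<close>,
  whose last coordinates \<open>(frac \<theta>\<^sub>k + s) P\<close> cluster within \<open>R\<close>.\<close>

lemma many_lattice_points_in_box:
  fixes \<alpha> :: "real^'d"
  assumes N: "\<forall>i\<in>J. N i \<ge> 1" and R: "R \<ge> 1"
  shows "\<exists>S. finite S \<and> (\<forall>z\<in>S. \<exists>v. int_vec v \<and> z = lattice_point \<alpha> J N v)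
           \<and> (\<forall>z\<in>S. \<forall>l. \<bar>z $ l\<bar> \<le> R) \<and> R ^ (card J + 1) / 2 \<le> real (card S)"
proof -
  define P where "P = prod N J"
  define A where "A = PiE J (\<lambda>i. {0..\<lfloor>R * N i\<rfloor>})"
  define \<theta> where "\<theta> k = (\<Sum>i\<in>J. of_int (k i) * \<alpha> $ i)" for k :: "'d \<Rightarrow> int"
  define u where "u = nat \<lceil>R / P\<rceil>"
  define X where "X = A \<times> {0..<u}"
  define ht where "ht x = frac (\<theta> (fst x)) + real (snd x)" for x :: "('d \<Rightarrow> int) \<times> nat"
  have Npos: "N i > 0" if "i \<in> J" for i using N that by fastforce
  have P: "P > 0" unfolding P_def using Npos by (simp add: prod_pos)
  have uP: "R \<le> real u * P" using P unfolding u_def by (simp add: pos_divide_le_eq[symmetric]) linarith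
  have "finite X" unfolding X_def A_def by (simp add: finite_PiE)
  moreover have "0 \<le> ht x \<and> ht x \<le> real u" if "x \<in> X" for x
    using that frac_ge_0[of "\<theta> (fst x)"] frac_lt_1[of "\<theta> (fst x)"] unfolding ht_def X_def by auto
  ultimately obtain F where F: "F \<subseteq> X" "real (card X) \<le> real (card F) * (real u / (R / P) + 1)"
    and cluster: "\<And>x x'. x \<in> F \<Longrightarrow> x' \<in> F \<Longrightarrow> \<bar>ht x - ht x'\<bar> < R / P"
    using exists_large_cluster[of X ht "real u" "R / P"] R P by auto
  have card_F: "R ^ (card J + 1) / 2 \<le> real (card F)"
  proof -
    define m where "m = real u * P / R"
    have m: "1 \<le> m" unfolding m_def using uP R by (simp add: pos_le_divide_eq)
    have "R ^ card J * P = (\<Prod>i\<in>J. R * N i)" unfolding P_def by (simp add: prod.distrib)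
    also have "\<dots> \<le> real (card A)"
      unfolding A_def using R Npos by (intro card_int_box_ge) (auto simp: less_imp_le)
    finally have "R ^ card J * P * real u \<le> real (card X)"
      unfolding X_def by (simp add: card_cartesian_product mult_right_mono)
    also have "\<dots> \<le> real (card F) * (m + 1)" using F(2) unfolding m_def by simp
    also have "\<dots> \<le> real (card F) * (2 * m)" using m by (intro mult_left_mono) auto
    finally have "R ^ card J * P * real u * R \<le> real (card F) * (2 * m) * R"
      using R by (intro mult_right_mono) auto
    also have "\<dots> = (2 * real (card F)) * (real u * P)" unfolding m_def using R by simp
    finally have "R ^ (card J + 1) * (real u * P) \<le> (2 * real (card F)) * (real u * P)"
      by (simp add: mult_ac)
    moreover have "real u * P > 0" using uP R by linarith
    ultimately have "R ^ (card J + 1) \<le> 2 * real (card F)" by (rule mult_right_le_imp_le)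
    then show ?thesis by simp
  qed
  have "0 < R ^ (card J + 1) / 2" using R by simp
  then have "card F \<noteq> 0" using card_F by linarith
  then obtain x0 where x0: "x0 \<in> F" by (metis card.empty ex_in_conv)
  define V :: "('d \<Rightarrow> int) \<times> nat \<Rightarrow> real^'d option" where "V x = (\<chi> l. case l of
      Some i \<Rightarrow> if i \<in> J then of_int (fst x i - fst x0 i) else 0
    | None \<Rightarrow> of_int ((int (snd x) - \<lfloor>\<theta> (fst x)\<rfloor>) - (int (snd x0) - \<lfloor>\<theta> (fst x0)\<rfloor>)))"
    for x
  define g where "g x = lattice_point \<alpha> J N (V x)" for x
  have g_Some: "g x $ Some i = (if i \<in> J then of_int (fst x i - fst x0 i) / N i else 0)" for x i
    unfolding g_def V_def by simp
  have g_None: "g x $ None = (ht x - ht x0) * P" for x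
  proof -
    have "(\<Sum>i\<in>J. V x $ Some i * \<alpha> $ i) = \<theta> (fst x) - \<theta> (fst x0)"
      unfolding V_def \<theta>_def by (simp add: sum_subtractf left_diff_distrib)
    then have "g x $ None = ((\<theta> (fst x) - \<theta> (fst x0)) + V x $ None) * P"
      unfolding g_def lattice_point_None P_def by simp
    also have "\<dots> = (ht x - ht x0) * P" unfolding V_def ht_def frac_def by (simp add: algebra_simps)
    finally show ?thesis .
  qed
  have F_A: "fst x \<in> A" if "x \<in> F" for x using that F(1) unfolding X_def by auto
  have "inj_on g F"
  proof (rule inj_onI)
    fix x x' assume x: "x \<in> F" "x' \<in> F" "g x = g x'"
    have "fst x i = fst x' i" if "i \<in> J" for i
      using arg_cong[OF x(3), of "\<lambda>z. z $ Some i"] that Npos[OF that] by (simp add: g_Some)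
    then have "fst x = fst x'" using F_A[OF x(1)] F_A[OF x(2)] unfolding A_def by (intro PiE_ext) auto
    moreover have "ht x = ht x'" using arg_cong[OF x(3), of "\<lambda>z. z $ None"] P by (simp add: g_None)
    ultimately show "x = x'" unfolding ht_def by (simp add: prod_eq_iff)
  qed
  moreover have "\<bar>g x $ l\<bar> \<le> R" if "x \<in> F" for x l
  proof (cases l)
    case None
    then show ?thesis using cluster[OF that x0] P by (simp add: g_None abs_mult pos_less_divide_eq)
  next
    case (Some i)
    show ?thesis
    proof (cases "i \<in> J")
      case True
      have "fst x i \<in> {0..\<lfloor>R * N i\<rfloor>}" "fst x0 i \<in> {0..\<lfloor>R * N i\<rfloor>}"
        using F_A[OF that] F_A[OF x0] True unfolding A_def by (auto simp: PiE_iff)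
      then have "\<bar>of_int (fst x i - fst x0 i)\<bar> \<le> R * N i" by simp linarith
      then show ?thesis using True Npos[OF True] by (simp add: Some g_Some abs_divide pos_divide_le_eq)
    qed (use R Some g_Some in simp)
  qed
  moreover have "\<exists>v. int_vec v \<and> g x = lattice_point \<alpha> J N v" for x
    unfolding g_def by (intro exI[of _ "V x"]) (auto simp: int_vec_def V_def split: option.split)
  ultimately show ?thesis
    using card_F F(1) \<open>finite X\<close> by (intro exI[of _ "g ` F"]) (auto simp: card_image finite_subset)
qed

text \<open>Many bounded points of a lattice without short vectors span its subspace: otherwise a
  normal vector \<open>w\<close> of their span exists, and pigeonholing all coordinates but the one where \<open>w\<close>
  is largest produces a short difference orthogonal to \<open>w\<close>.\<close>

lemma lattice_points_span:
  fixes \<alpha> :: "real^'d"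
  assumes sep: "\<And>v. int_vec v \<Longrightarrow> lattice_point \<alpha> J N v \<noteq> 0 \<Longrightarrow> \<exists>l. c1 \<le> \<bar>lattice_point \<alpha> J N v $ l\<bar>"
    and "0 < c1" and "0 \<le> R"
    and "finite S" and S_lattice: "\<forall>z\<in>S. \<exists>v. int_vec v \<and> z = lattice_point \<alpha> J N v"
    and S_bounded: "\<forall>z\<in>S. \<forall>l. \<bar>z $ l\<bar> \<le> R"
    and card: "(2 * R * (real CARD('d) + 1) / c1 + 1) ^ card J < real (card S)"
  shows "{u. \<forall>i. i \<notin> J \<longrightarrow> u $ Some i = 0} \<subseteq> span S"
proof
  fix u :: "real^'d option" assume u: "u \<in> {u. \<forall>i. i \<notin> J \<longrightarrow> u $ Some i = 0}"
  show "u \<in> span S"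
  proof (rule ccontr)
    assume "u \<notin> span S"
    obtain y w where y: "y \<in> span S" and orth: "\<And>x. x \<in> span S \<Longrightarrow> orthogonal w x" and "u = y + w"
      using orthogonal_subspace_decomp_exists[of S u] by blast
    have "w \<noteq> 0" using \<open>u \<notin> span S\<close> y \<open>u = y + w\<close> by auto
    have "y $ Some i = 0" if "i \<notin> J" for i
    proof -
      have "subspace {x :: real^'d option. x $ Some i = 0}" by (auto simp: subspace_def)
      moreover have "S \<subseteq> {x. x $ Some i = 0}" using S_lattice that by auto
      ultimately show ?thesis using y span_minimal by blast
    qed
    then have w_out: "w $ Some i = 0" if "i \<notin> J" for i using u that \<open>u = y + w\<close> by auto
    obtain l0 where l0: "\<And>l. \<bar>w $ l\<bar> \<le> \<bar>w $ l0\<bar>" using exists_max_abs_component by blast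
    have "w $ l0 \<noteq> 0"
    proof
      assume "w $ l0 = 0"
      then have "w $ l = 0" for l using l0[of l] by simp
      then show False using \<open>w \<noteq> 0\<close> by (simp add: vec_eq_iff)
    qed
    define K where "K = insert None (Some ` J) - {l0}"
    have "l0 \<in> insert None (Some ` J)" using \<open>w $ l0 \<noteq> 0\<close> w_out by (cases l0) auto
    then have "card K = card J" unfolding K_def by (simp add: card_image)
    define s where "s = c1 / (real CARD('d) + 1)"
    have s: "0 < s" "s < c1" "real CARD('d) * s < c1"
      using \<open>0 < c1\<close> unfolding s_def by (auto simp: field_simps)
    have "(\<Prod>\<kappa>\<in>K. (R - - R) / s + 1) < real (card S)"
      using card \<open>card K = card J\<close> unfolding s_def by (simp add: field_simps)
    then have "\<exists>z\<in>S. \<exists>z'\<in>S. z \<noteq> z' \<and> (\<forall>l\<in>K. \<bar>z $ l - z' $ l\<bar> < s)"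
      using S_bounded s(1) \<open>0 \<le> R\<close> \<open>finite S\<close>
      by (intro box_pigeonhole[where \<phi> = "\<lambda>x l. x $ l" and lo = "\<lambda>_. - R" and hi = "\<lambda>_. R"])
        (auto simp: abs_le_iff K_def minus_le_iff)
    then obtain z z' where zz: "z \<in> S" "z' \<in> S" "z \<noteq> z'" and close: "\<And>l. l \<in> K \<Longrightarrow> \<bar>z $ l - z' $ l\<bar> < s"
      by blast
    obtain v v' where v: "int_vec v" "z = lattice_point \<alpha> J N v" and v': "int_vec v'" "z' = lattice_point \<alpha> J N v'"
      using S_lattice zz by metis
    define d where "d = z - z'"
    have d: "d = lattice_point \<alpha> J N (v - v')"
      unfolding d_def v(2) v'(2) linear_diff[OF linear_lattice_point] ..
    have "int_vec (v - v')" using v v' unfolding int_vec_def by auto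
    moreover have "lattice_point \<alpha> J N (v - v') \<noteq> 0" using zz(3) d unfolding d_def by auto
    ultimately obtain l1 where l1: "c1 \<le> \<bar>d $ l1\<bar>" using sep d by auto
    have d_small: "\<bar>d $ l\<bar> \<le> s" if "l \<noteq> l0" for l
    proof (cases "l \<in> K")
      case True
      then show ?thesis using close unfolding d_def by (simp add: less_imp_le)
    next
      case False
      then have "d $ l = 0" using that unfolding K_def d by (cases l) auto
      then show ?thesis using s by simp
    qed
    have "inner d w = 0"
      using orth[of z] orth[of z'] zz span_base[of z S] span_base[of z' S]
      unfolding d_def by (simp add: orthogonal_def inner_diff_left inner_diff_right inner_commute)
    then have "\<bar>d $ l0\<bar> \<le> real CARD('d) * s"
      using abs_component_le_if_inner_zero[OF _ l0 \<open>w $ l0 \<noteq> 0\<close> d_small] by simp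
    then have "\<bar>d $ l\<bar> < c1" for l using d_small[of l] s by (cases "l = l0") auto
    then show False using l1 by (meson not_le)
  qed
qed

text \<open>Rounding the coordinates of \<open>u\<close> with respect to a basis of \<open>span S\<close> chosen inside \<open>S\<close>.\<close>

lemma int_image_close_to_span:
  fixes f :: "real^'n \<Rightarrow> real^'m"
  assumes "linear f" and S: "\<forall>z\<in>S. \<exists>v. int_vec v \<and> z = f v" and bounded: "\<forall>z\<in>S. \<forall>l. \<bar>z $ l\<bar> \<le> R"
    and "u \<in> span S" and "0 \<le> R"
  shows "\<exists>v. int_vec v \<and> (\<forall>l. \<bar>f v $ l - u $ l\<bar> \<le> real CARD('m) * R)"
proof -
  obtain B where B: "B \<subseteq> S" "independent B" "S \<subseteq> span B"
    by (rule maximal_independent_subset)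
  have "finite B" and card_B: "card B \<le> CARD('m)"
    using independent_bound[OF B(2)] by auto
  have "u \<in> span B" using \<open>u \<in> span S\<close> B(3) by (metis span_mono span_span subsetD)
  then obtain c where c: "u = (\<Sum>b\<in>B. c b *\<^sub>R b)" unfolding span_finite[OF \<open>finite B\<close>] by auto
  define vb where "vb b = (SOME v. int_vec v \<and> b = f v)" for b
  have vb: "int_vec (vb b) \<and> b = f (vb b)" if "b \<in> B" for b
    unfolding vb_def by (rule someI_ex) (use S B(1) that in auto)
  define v where "v = (\<Sum>b\<in>B. of_int \<lfloor>c b\<rfloor> *\<^sub>R vb b)"
  have "f v = (\<Sum>b\<in>B. of_int \<lfloor>c b\<rfloor> *\<^sub>R b)"
    using vb unfolding v_def linear_sum[OF \<open>linear f\<close>] linear_cmul[OF \<open>linear f\<close>] by simp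
  then have f_v: "f v $ l - u $ l = (\<Sum>b\<in>B. (of_int \<lfloor>c b\<rfloor> - c b) * b $ l)" for l
    unfolding c sum_component by (simp add: sum_subtractf left_diff_distrib)
  have "int_vec v"
    using vb unfolding int_vec_def v_def sum_component by (auto intro!: Ints_sum Ints_mult)
  moreover have "\<bar>f v $ l - u $ l\<bar> \<le> real CARD('m) * R" for l
  proof -
    have "\<bar>f v $ l - u $ l\<bar> \<le> (\<Sum>b\<in>B. 1 * R)"
    proof (unfold f_v, rule order.trans[OF sum_abs sum_mono])
      fix b assume "b \<in> B"
      then show "\<bar>(of_int \<lfloor>c b\<rfloor> - c b) * b $ l\<bar> \<le> 1 * R"
        using bounded B(1) unfolding abs_mult by (intro mult_mono) (auto, linarith)
    qed
    also have "\<dots> \<le> real CARD('m) * R" using card_B \<open>0 \<le> R\<close> by (simp add: mult_right_mono)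
    finally show ?thesis .
  qed
  ultimately show ?thesis by blast
qed

lemma lattice_covering_radius:
  fixes \<alpha> :: "real^'d"
  assumes "c > 0"
    and bad: "\<And>q::int. q \<noteq> 0 \<Longrightarrow> c \<le> \<bar>of_int q\<bar> * (\<Prod>i\<in>J. dZ (of_int q * \<alpha> $ i))"
  shows "\<exists>\<mu>\<ge>0. \<forall>N. (\<forall>i\<in>J. N i \<ge> 1) \<longrightarrow> (\<forall>u. (\<forall>i. i \<notin> J \<longrightarrow> u $ Some i = 0) \<longrightarrow>
           (\<exists>v. int_vec v \<and> (\<forall>l. \<bar>lattice_point \<alpha> J N v $ l - u $ l\<bar> \<le> \<mu>)))"
proof -
  obtain c1 where "c1 > 0" and sep: "\<forall>N v. (\<forall>i\<in>J. N i \<ge> 1) \<longrightarrow> int_vec v \<longrightarrow>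
      lattice_point \<alpha> J N v \<noteq> 0 \<longrightarrow> (\<exists>l. c1 \<le> \<bar>lattice_point \<alpha> J N v $ l\<bar>)"
    using lattice_point_large_component[OF assms] by blast
  define M where "M = 2 * (real CARD('d) + 1) / c1 + 1"
  define R where "R = 2 * M ^ card J + 1"
  have "M \<ge> 1" unfolding M_def using \<open>c1 > 0\<close> by simp
  then have "R \<ge> 1" unfolding R_def by simp
  have "\<exists>v. int_vec v \<and> (\<forall>l. \<bar>lattice_point \<alpha> J N v $ l - u $ l\<bar> \<le> real CARD('d option) * R)"
    if N: "\<forall>i\<in>J. N i \<ge> 1" and u: "\<forall>i. i \<notin> J \<longrightarrow> u $ Some i = 0" for N u
  proof -
    obtain S where S: "finite S" "\<forall>z\<in>S. \<exists>v. int_vec v \<and> z = lattice_point \<alpha> J N v"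
      "\<forall>z\<in>S. \<forall>l. \<bar>z $ l\<bar> \<le> R" "R ^ (card J + 1) / 2 \<le> real (card S)"
      using many_lattice_points_in_box[OF N \<open>R \<ge> 1\<close>, of \<alpha>] by (elim exE conjE) blast
    have "2 * R * (real CARD('d) + 1) / c1 = R * (2 * (real CARD('d) + 1) / c1)" by simp
    moreover have "R * M = R * (2 * (real CARD('d) + 1) / c1) + R"
      unfolding M_def by (simp only: distrib_left mult_1_right)
    ultimately have "2 * R * (real CARD('d) + 1) / c1 + 1 \<le> R * M"
      using \<open>R \<ge> 1\<close> by linarith
    moreover have "0 \<le> 2 * R * (real CARD('d) + 1) / c1 + 1" using \<open>R \<ge> 1\<close> \<open>c1 > 0\<close> by simp
    ultimately have "(2 * R * (real CARD('d) + 1) / c1 + 1) ^ card J \<le> (R * M) ^ card J"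
      by (rule power_mono)
    also have "\<dots> = R ^ card J * M ^ card J" by (rule power_mult_distrib)
    also have "\<dots> < R ^ card J * (R / 2)"
      using \<open>R \<ge> 1\<close> unfolding R_def by (intro mult_strict_left_mono) auto
    also have "\<dots> \<le> real (card S)" using S(4) by (simp add: mult.commute)
    finally have card: "(2 * R * (real CARD('d) + 1) / c1 + 1) ^ card J < real (card S)" .
    have "{u. \<forall>i. i \<notin> J \<longrightarrow> u $ Some i = 0} \<subseteq> span S"
      using sep N \<open>R \<ge> 1\<close> by (intro lattice_points_span[OF _ \<open>c1 > 0\<close> _ S(1-3) card]) auto
    then have "u \<in> span S" using u by blast
    then show ?thesis
      using \<open>R \<ge> 1\<close> by (intro int_image_close_to_span[OF linear_lattice_point S(2,3)]) simp_all
  qed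
  moreover have "0 \<le> real CARD('d option) * R" using \<open>R \<ge> 1\<close> by simp
  ultimately show ?thesis by blast
qed

lemma uniform_lattice_covering_radius:
  fixes \<alpha> :: "real^'d"
  assumes "liminf (\<lambda>n::nat. ereal (real n * (\<Prod>i\<in>UNIV. dZ (real n * \<alpha> $ i)))) > 0"
  shows "\<exists>\<mu>. \<forall>J N u. (\<forall>i\<in>J. N i \<ge> 1) \<longrightarrow> (\<forall>i. i \<notin> J \<longrightarrow> u $ Some i = 0) \<longrightarrow>
           (\<exists>v. int_vec v \<and> (\<forall>l. \<bar>lattice_point \<alpha> J N v $ l - u $ l\<bar> \<le> \<mu>))"
proof -
  define covers where "covers J \<mu> \<longleftrightarrow> (\<forall>N. (\<forall>i\<in>J. N i \<ge> 1) \<longrightarrow> (\<forall>u. (\<forall>i. i \<notin> J \<longrightarrow> u $ Some i = 0) \<longrightarrow>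
      (\<exists>v. int_vec v \<and> (\<forall>l. \<bar>lattice_point \<alpha> J N v $ l - u $ l\<bar> \<le> \<mu>))))" for J \<mu>
  obtain c where "c > 0" and bad: "\<forall>J (q::int). q \<noteq> 0 \<longrightarrow> c \<le> \<bar>of_int q\<bar> * (\<Prod>i\<in>J. dZ (of_int q * \<alpha> $ i))"
    using badly_approximable_uniform[OF assms] by blast
  have "\<forall>J. \<exists>\<mu>. covers J \<mu>"
  proof
    fix J
    show "\<exists>\<mu>. covers J \<mu>"
      using lattice_covering_radius[OF \<open>c > 0\<close>, where J = J and \<alpha> = \<alpha>] bad
      unfolding covers_def by blast
  qed
  then obtain \<mu> where \<mu>: "\<And>J. covers J (\<mu> J)" by (metis choice)
  show ?thesis
  proof (rule exI, intro allI impI)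
    fix J :: "'d set" and N :: "'d \<Rightarrow> real" and u :: "real^'d option"
    assume "\<forall>i\<in>J. N i \<ge> 1" "\<forall>i. i \<notin> J \<longrightarrow> u $ Some i = 0"
    then obtain v where "int_vec v" "\<forall>l. \<bar>lattice_point \<alpha> J N v $ l - u $ l\<bar> \<le> \<mu> J"
      using \<mu>[of J] unfolding covers_def by blast
    moreover have "\<mu> J \<le> Max (range \<mu>)" by (intro Max_ge) auto
    ultimately show "\<exists>v. int_vec v \<and> (\<forall>l. \<bar>lattice_point \<alpha> J N v $ l - u $ l\<bar> \<le> Max (range \<mu>))"
      by (meson order.trans)
  qed
qed

section \<open>The lattice of the statement\<close>

lemma diagm_entry [simp]: "diagm t $ i $ j = (if i = j then t i else 0)"
  by (simp add: diagm_def)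

lemma diagm_mult: "diagm a ** diagm b = diagm (\<lambda>i. a i * b i)"
  by (simp add: vec_eq_iff matrix_matrix_mult_def if_distrib[of "\<lambda>x. x * _"] sum.delta cong: if_cong)

lemma vector_diagm: "(x v* diagm t) $ i = x $ i * t i"
  by (simp add: vector_matrix_mult_def if_distrib[of "\<lambda>x. _ * x"] sum.delta' cong: if_cong)

lemma matrix_inv_diagm:
  assumes "\<And>i. t i \<noteq> 0"
  shows "matrix_inv (diagm t) = diagm (\<lambda>i. 1 / t i)"
proof -
  define A B where "A = diagm t" and "B = diagm (\<lambda>i. 1 / t i)"
  have AB: "A ** B = mat 1" and "B ** A = mat 1"
    using assms unfolding A_def B_def by (simp_all add: diagm_mult vec_eq_iff mat_def)
  then have "A ** matrix_inv A = mat 1 \<and> matrix_inv A ** A = mat 1"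
    unfolding matrix_inv_def by (intro someI_ex[of "\<lambda>A'. A ** A' = mat 1 \<and> A' ** A = mat 1"]) blast
  then have "matrix_inv A = matrix_inv A ** (A ** B)" and "matrix_inv A ** A = mat 1"
    using AB by (simp_all add: matrix_mul_rid)
  then have "matrix_inv A = B" by (simp add: matrix_mul_assoc matrix_mul_lid)
  then show ?thesis unfolding A_def B_def .
qed

definition lattice_matrix :: "real^'d \<Rightarrow> ('d \<Rightarrow> real) \<Rightarrow> real^('d::finite option)^('d option)" where
  "lattice_matrix \<alpha> t = block (mat 1) \<alpha> 0 1 ** block (matrix_inv (diagm t)) 0 0 (det (diagm t))"

lemma lattice_matrix_entries:
  assumes "\<And>i. t i \<noteq> 0"
  shows "lattice_matrix \<alpha> t $ Some i $ Some j = (if i = j then 1 / t i else 0)"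
    and "lattice_matrix \<alpha> t $ Some i $ None = \<alpha> $ i * (\<Prod>i\<in>UNIV. t i)"
    and "lattice_matrix \<alpha> t $ None $ Some j = 0"
    and "lattice_matrix \<alpha> t $ None $ None = (\<Prod>i\<in>UNIV. t i)"
  using assms
  by (simp_all add: lattice_matrix_def matrix_matrix_mult_def matrix_inv_diagm det_diagonal
      sum_UNIV_option block_def mat_def if_distrib[of "\<lambda>x. x * _"] sum.delta cong: if_cong)

lemma xpart_lattice_matrix:
  assumes "\<And>i. t i \<noteq> 0"
  shows "xpart (V v* lattice_matrix \<alpha> t) $ i = V $ Some i / t i"
  using assms
  by (simp add: xpart_def vector_matrix_mult_def sum_UNIV_option lattice_matrix_entries
      if_distrib[of "\<lambda>x. _ * x"] sum.delta' cong: if_cong)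

lemma ypart_lattice_matrix:
  assumes "\<And>i. t i \<noteq> 0"
  shows "ypart (V v* lattice_matrix \<alpha> t) = ((\<Sum>i\<in>UNIV. V $ Some i * \<alpha> $ i) + V $ None) * (\<Prod>i\<in>UNIV. t i)"
  using assms
  by (simp add: ypart_def vector_matrix_mult_def sum_UNIV_option lattice_matrix_entries
      distrib_right sum_distrib_right) (simp add: distrib_left sum_distrib_left mult_ac)

lemma finite_bounded_int_vecs: "finite {v :: real^'n. int_vec v \<and> (\<forall>l. \<bar>v $ l\<bar> \<le> C)}"
proof -
  have "{v :: real^'n. int_vec v \<and> (\<forall>l. \<bar>v $ l\<bar> \<le> C)}
      \<subseteq> (\<lambda>f. \<chi> l. of_int (f l)) ` (PiE UNIV (\<lambda>_. {-\<lceil>C\<rceil>..\<lceil>C\<rceil>}))"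
  proof
    fix v :: "real^'n" assume v: "v \<in> {v. int_vec v \<and> (\<forall>l. \<bar>v $ l\<bar> \<le> C)}"
    define f where "f l = \<lfloor>v $ l\<rfloor>" for l
    have "v $ l = of_int (f l)" for l using v unfolding f_def int_vec_def by (auto elim!: Ints_cases)
    moreover have "f l \<in> {-\<lceil>C\<rceil>..\<lceil>C\<rceil>}" for l
    proof -
      have "\<bar>v $ l\<bar> \<le> C" using v by blast
      then have "of_int (f l) \<le> C" "of_int (- f l) \<le> C" using calculation[of l] by (simp_all add: abs_le_iff)
      then have "\<lceil>of_int (f l) :: real\<rceil> \<le> \<lceil>C\<rceil>" "\<lceil>of_int (- f l) :: real\<rceil> \<le> \<lceil>C\<rceil>"
        by (simp_all only: ceiling_mono)
      then have "f l \<le> \<lceil>C\<rceil>" "- f l \<le> \<lceil>C\<rceil>" by (simp_all only: ceiling_of_int)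
      then show ?thesis by simp
    qed
    ultimately show "v \<in> (\<lambda>f. \<chi> l. of_int (f l)) ` (PiE UNIV (\<lambda>_. {-\<lceil>C\<rceil>..\<lceil>C\<rceil>}))"
      by (intro image_eqI[of _ _ f]) (auto simp: vec_eq_iff)
  qed
  moreover have "finite (PiE (UNIV :: 'n set) (\<lambda>_. {-\<lceil>C\<rceil>..\<lceil>C\<rceil>}))" by (intro finite_PiE) auto
  ultimately show ?thesis by (rule finite_subset[OF _ finite_imageI])
qed

lemma finite_Fset_le:
  fixes D :: "(real^'d) set"
  assumes "bounded D" and t: "\<And>i. t i > 0"
  shows "finite (Fset D (lattice_matrix \<alpha> t) p \<inter> {..\<Theta>})"
proof -
  define M where "M = lattice_matrix \<alpha> t"
  define PT where "PT = (\<Prod>i\<in>UNIV. t i)"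
  have "PT > 0" unfolding PT_def using t by (simp add: prod_pos)
  have t0: "\<And>i. t i \<noteq> 0" using t by (metis less_irrefl)
  obtain Bd where Bd: "\<forall>x\<in>D. norm x \<le> Bd" using \<open>bounded D\<close> unfolding bounded_iff by blast
  define C1 where "C1 = (\<Sum>i\<in>UNIV. t i * (\<bar>Bd\<bar> + \<bar>p $ i\<bar>))"
  define C where "C = C1 + \<bar>\<Theta>\<bar> / PT + C1 * (\<Sum>i\<in>UNIV. \<bar>\<alpha> $ i\<bar>)"
  have "Fset D M p \<inter> {..\<Theta>} \<subseteq> (\<lambda>V. ypart (V v* M)) ` {V. int_vec V \<and> (\<forall>l. \<bar>V $ l\<bar> \<le> C)}"
  proof
    fix y assume "y \<in> Fset D M p \<inter> {..\<Theta>}"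
    then obtain V where V: "int_vec V" "y = ypart (V v* M)" "0 < y" "y \<le> \<Theta>" "xpart (V v* M) + p \<in> D"
      unfolding Fset_def row_lattice_def int_vec_def by auto
    have C1: "\<bar>V $ Some i\<bar> \<le> C1" for i
    proof -
      have "norm (xpart (V v* M) + p) \<le> Bd" using Bd V(5) by blast
      then have "\<bar>(xpart (V v* M) + p) $ i\<bar> \<le> Bd" by (rule order.trans[OF component_le_norm_cart])
      then have "\<bar>V $ Some i / t i + p $ i\<bar> \<le> Bd"
        unfolding M_def by (simp add: xpart_lattice_matrix[OF t0])
      then have "\<bar>V $ Some i / t i\<bar> \<le> \<bar>Bd\<bar> + \<bar>p $ i\<bar>"
        using abs_triangle_ineq4[of "V $ Some i / t i + p $ i" "p $ i"] by simp
      then have "\<bar>V $ Some i\<bar> \<le> t i * (\<bar>Bd\<bar> + \<bar>p $ i\<bar>)"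
        using t[of i] by (simp add: abs_divide pos_divide_le_eq mult.commute)
      also have "\<dots> \<le> C1"
        unfolding C1_def by (intro member_le_sum) (auto intro!: mult_nonneg_nonneg simp: less_imp_le[OF t])
      finally show ?thesis .
    qed
    have "0 \<le> C1" using C1[of undefined] by linarith
    have sum_bound: "\<bar>\<Sum>i\<in>UNIV. V $ Some i * \<alpha> $ i\<bar> \<le> C1 * (\<Sum>i\<in>UNIV. \<bar>\<alpha> $ i\<bar>)"
      unfolding sum_distrib_left
      by (rule order.trans[OF sum_abs sum_mono]) (use C1 in \<open>simp add: abs_mult mult_right_mono\<close>)
    have "0 < (\<Sum>i\<in>UNIV. V $ Some i * \<alpha> $ i) + V $ None"
      "(\<Sum>i\<in>UNIV. V $ Some i * \<alpha> $ i) + V $ None \<le> \<bar>\<Theta>\<bar> / PT"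
      using V(2-4) \<open>PT > 0\<close> unfolding M_def ypart_lattice_matrix[OF t0] PT_def[symmetric]
      by (simp_all add: zero_less_mult_iff pos_le_divide_eq)
    then have "\<bar>V $ None\<bar> \<le> C" unfolding C_def using sum_bound \<open>0 \<le> C1\<close> by linarith
    moreover have "\<bar>V $ Some i\<bar> \<le> C" for i
    proof -
      have "0 \<le> \<bar>\<Theta>\<bar> / PT" "0 \<le> C1 * (\<Sum>i\<in>UNIV. \<bar>\<alpha> $ i\<bar>)"
        using \<open>PT > 0\<close> \<open>0 \<le> C1\<close> by (simp_all add: sum_nonneg)
      then show ?thesis using C1[of i] unfolding C_def by linarith
    qed
    ultimately have "\<bar>V $ l\<bar> \<le> C" for l by (cases l) auto
    then show "y \<in> (\<lambda>V. ypart (V v* M)) ` {V. int_vec V \<and> (\<forall>l. \<bar>V $ l\<bar> \<le> C)}"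
      using V(1,2) by blast
  qed
  then show ?thesis
    unfolding M_def by (rule finite_subset[OF _ finite_imageI[OF finite_bounded_int_vecs]])
qed

lemma F_le_of_mem_Fset:
  assumes "finite (Fset D M p \<inter> {..y})" and "y \<in> Fset D M p"
  shows "F D M p \<le> ereal y"
proof -
  define m where "m = Min (Fset D M p \<inter> {..y})"
  have m: "m \<in> Fset D M p" "m \<le> y" using Min_in[OF assms(1)] assms(2) unfolding m_def by auto
  have min: "m \<le> z" if "z \<in> Fset D M p" for z
  proof (cases "z \<le> y")
    case True
    then show ?thesis using that assms(1) unfolding m_def by (intro Min_le) auto
  qed (use m in auto)
  have "(THE m. m \<in> Fset D M p \<and> (\<forall>z\<in>Fset D M p. m \<le> z)) = m"
    using m min by (intro the_equality) (auto intro: order.antisym)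
  then show ?thesis unfolding F_def using m min by auto
qed

lemma prod_le_power_mult_prod:
  fixes t :: "'d::finite \<Rightarrow> real"
  assumes "\<And>i. 0 \<le> t i" "\<And>i. i \<in> J \<Longrightarrow> t i \<le> m * N i" "\<And>i. i \<notin> J \<Longrightarrow> t i \<le> m"
  shows "(\<Prod>i\<in>UNIV. t i) \<le> m ^ CARD('d) * prod N J"
proof -
  have "(\<Prod>i\<in>UNIV. t i) \<le> (\<Prod>i\<in>UNIV. m * (if i \<in> J then N i else 1))"
    using assms by (intro prod_mono) auto
  also have "\<dots> = m ^ CARD('d) * prod N J"
    by (simp add: prod.distrib prod.If_cases Int_absorb1)
  finally show ?thesis .
qed

text \<open>The lattice point is found by covering: with \<open>J = {i. \<epsilon> t\<^sub>i \<ge> L}\<close> and \<open>N\<^sub>i = \<epsilon> t\<^sub>i / L\<close>, a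
  lattice point within \<open>\<mu> < L/2\<close> of \<open>(L/2, \<dots>, L/2, \<beta> \<Prod>N + L/2)\<close> has \<open>x + k T\<^sup>-\<^sup>1\<close> in the cube
  \<open>[0, \<epsilon>)\<^sup>d\<close> (coordinates outside \<open>J\<close> being set to \<open>0\<close>) and height in \<open>(0, L \<Prod>t / \<Prod>N]\<close>.\<close>

lemma exists_low_point_in_Fset:
  fixes D :: "(real^'d) set" and \<alpha> k :: "real^'d"
  assumes "\<epsilon> > 0" and cube: "{x. \<forall>i. 0 \<le> x $ i \<and> x $ i < \<epsilon>} \<subseteq> D"
    and cover: "\<forall>J N u. (\<forall>i\<in>J. N i \<ge> 1) \<longrightarrow> (\<forall>i. i \<notin> J \<longrightarrow> u $ Some i = 0) \<longrightarrow>
        (\<exists>v. int_vec v \<and> (\<forall>l. \<bar>lattice_point \<alpha> J N v $ l - u $ l\<bar> \<le> \<mu>))"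
    and L: "0 < L" "2 * \<mu> < L" and t: "\<And>i. 1 \<le> t i" and k: "\<And>i. k $ i \<in> \<int>"
  shows "\<exists>y\<in>Fset D (lattice_matrix \<alpha> t) (k v* matrix_inv (diagm t)). y \<le> L * max 1 (L / \<epsilon>) ^ CARD('d)"
proof -
  have tpos: "t i > 0" for i using t[of i] by linarith
  then have t0: "t i \<noteq> 0" for i by (metis less_irrefl)
  define M where "M = lattice_matrix \<alpha> t"
  define J where "J = {i. \<epsilon> * t i \<ge> L}"
  define N where "N i = \<epsilon> * t i / L" for i
  define \<beta> where "\<beta> = (\<Sum>i\<in>UNIV. k $ i * \<alpha> $ i)"
  define u :: "real^'d option" where
    "u = (\<chi> l. case l of Some i \<Rightarrow> if i \<in> J then L / 2 else 0 | None \<Rightarrow> \<beta> * prod N J + L / 2)"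
  have N: "\<forall>i\<in>J. N i \<ge> 1" using L(1) unfolding J_def N_def by (simp add: le_divide_eq_1_pos)
  have Npos: "N i > 0" for i unfolding N_def using \<open>\<epsilon> > 0\<close> tpos[of i] L(1) by (intro divide_pos_pos) auto
  have "\<forall>i. i \<notin> J \<longrightarrow> u $ Some i = 0" unfolding u_def by simp
  then obtain v where v: "int_vec v" and v_u: "\<forall>l. \<bar>lattice_point \<alpha> J N v $ l - u $ l\<bar> \<le> \<mu>"
    using cover[THEN spec[of _ J], THEN spec[of _ N], THEN spec[of _ u]] N by blast
  have close: "\<bar>lattice_point \<alpha> J N v $ l - u $ l\<bar> < L / 2" for l
    using v_u[THEN spec[of _ l]] L(2) by linarith
  define kk :: "real^'d" where "kk = (\<chi> i. if i \<in> J then v $ Some i else 0)"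
  define V :: "real^'d option" where "V = (\<chi> l. case l of Some i \<Rightarrow> kk $ i - k $ i | None \<Rightarrow> v $ None)"
  define e where "e = (\<Sum>i\<in>J. v $ Some i * \<alpha> $ i) + v $ None - \<beta>"
  have "int_vec V" using v k unfolding int_vec_def V_def kk_def by (auto split: option.split)
  then have "V v* M \<in> row_lattice M" unfolding row_lattice_def int_vec_def by auto
  have "xpart (V v* M) + k v* matrix_inv (diagm t) = (\<chi> i. kk $ i / t i)"
    unfolding M_def using t0
    by (simp add: vec_eq_iff xpart_lattice_matrix vector_diagm matrix_inv_diagm V_def diff_divide_distrib)
  moreover have "(\<chi> i. kk $ i / t i) \<in> D"
  proof (rule subsetD[OF cube], safe)
    fix i
    have "0 \<le> kk $ i / t i \<and> kk $ i / t i < \<epsilon>"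
    proof (cases "i \<in> J")
      case True
      have "\<bar>v $ Some i / N i - L / 2\<bar> < L / 2" using close[of "Some i"] True unfolding u_def by simp
      then have "0 < v $ Some i / N i" and "v $ Some i / N i < L" unfolding abs_less_iff by linarith+
      moreover have "kk $ i / t i = (v $ Some i / N i) * (\<epsilon> / L)"
        unfolding kk_def N_def using True t0[of i] L \<open>\<epsilon> > 0\<close> by (simp add: field_simps)
      moreover have "(v $ Some i / N i) * (\<epsilon> / L) < L * (\<epsilon> / L)"
        using calculation(2) \<open>\<epsilon> > 0\<close> L(1) by (intro mult_strict_right_mono) auto
      moreover have "0 \<le> (v $ Some i / N i) * (\<epsilon> / L)"
        by (intro mult_nonneg_nonneg) (use calculation(1) \<open>\<epsilon> > 0\<close> L(1) in auto)
      ultimately show ?thesis using L(1) by simp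
    qed (simp add: kk_def \<open>\<epsilon> > 0\<close>)
    then show "0 \<le> (\<chi> i. kk $ i / t i) $ i" "(\<chi> i. kk $ i / t i) $ i < \<epsilon>" by auto
  qed
  moreover have "\<bar>e * prod N J - L / 2\<bar> < L / 2"
    using close[of None] unfolding u_def e_def by (simp add: algebra_simps)
  then have e_pos: "0 < e * prod N J" and e_less: "e * prod N J < L" unfolding abs_less_iff by linarith+
  have "0 < prod N J" using Npos by (simp add: prod_pos)
  then have "0 < e" using e_pos by (simp add: zero_less_mult_iff)
  moreover have "ypart (V v* M) = e * (\<Prod>i\<in>UNIV. t i)"
  proof -
    have "(\<Sum>i\<in>UNIV. kk $ i * \<alpha> $ i) = (\<Sum>i\<in>J. v $ Some i * \<alpha> $ i)"
      unfolding kk_def by (simp add: if_distrib[of "\<lambda>x. x * _"] sum.If_cases Int_absorb1)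
    then show ?thesis
      unfolding M_def ypart_lattice_matrix[OF t0] e_def \<beta>_def V_def
      by (simp add: left_diff_distrib sum_subtractf algebra_simps)
  qed
  moreover have "e * (\<Prod>i\<in>UNIV. t i) \<le> L * max 1 (L / \<epsilon>) ^ CARD('d)"
  proof -
    have "(\<Prod>i\<in>UNIV. t i) \<le> max 1 (L / \<epsilon>) ^ CARD('d) * prod N J"
    proof (rule prod_le_power_mult_prod)
      fix i
      show "0 \<le> t i" using tpos[of i] by simp
      have "t i = (L / \<epsilon>) * N i" unfolding N_def using \<open>\<epsilon> > 0\<close> L(1) by simp
      also have "\<dots> \<le> max 1 (L / \<epsilon>) * N i" using Npos[of i] by (intro mult_right_mono) auto
      finally show "t i \<le> max 1 (L / \<epsilon>) * N i" .
      show "t i \<le> max 1 (L / \<epsilon>)" if "i \<notin> J"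
      proof -
        have "t i * \<epsilon> \<le> L" using that unfolding J_def by (simp add: mult.commute)
        then have "t i \<le> L / \<epsilon>" using \<open>\<epsilon> > 0\<close> by (simp add: pos_le_divide_eq)
        then show ?thesis by simp
      qed
    qed
    then have "e * (\<Prod>i\<in>UNIV. t i) \<le> e * (max 1 (L / \<epsilon>) ^ CARD('d) * prod N J)"
      using \<open>0 < e\<close> by (intro mult_left_mono) auto
    then have "e * (\<Prod>i\<in>UNIV. t i) \<le> (e * prod N J) * max 1 (L / \<epsilon>) ^ CARD('d)"
      by (simp add: mult_ac)
    also have "\<dots> \<le> L * max 1 (L / \<epsilon>) ^ CARD('d)" using e_less by (intro mult_right_mono) auto
    finally show ?thesis .
  qed
  moreover have "0 < e * (\<Prod>i\<in>UNIV. t i)"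
    using \<open>0 < e\<close> tpos by (simp add: prod_pos)
  ultimately have "ypart (V v* M) \<in> Fset D M (k v* matrix_inv (diagm t))"
    and "ypart (V v* M) \<le> L * max 1 (L / \<epsilon>) ^ CARD('d)"
    using \<open>V v* M \<in> row_lattice M\<close> unfolding Fset_def by (simp_all add: exI[of _ "V v* M"])
  then show ?thesis unfolding M_def by blast
qed

theorem lemma3p1:
  fixes D :: "(real^'d) set" and \<alpha> :: "real^'d" and \<epsilon> :: real
  assumes "CARD('d) \<ge> 2"
    and "bounded D" and "convex D"
    and "\<epsilon> > 0" and "{x. \<forall>i. 0 \<le> x $ i \<and> x $ i < \<epsilon>} \<subseteq> D"
    and "liminf (\<lambda>n::nat. ereal (real n * (\<Prod>i\<in>UNIV. dZ (real n * \<alpha> $ i)))) > 0"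
  shows "\<exists>\<Theta>::real. \<forall>t::'d \<Rightarrow> real. (\<forall>i. t i \<ge> 1) \<longrightarrow>
           (\<forall>k \<in> (\<lambda>x. x v* diagm t) ` D. (\<forall>i. k $ i \<in> \<int>) \<longrightarrow>
              F D (block (mat 1) \<alpha> 0 1 ** block (matrix_inv (diagm t)) 0 0 (det (diagm t)))
                  (k v* matrix_inv (diagm t)) \<le> ereal \<Theta>)"
proof -
  obtain \<mu> where cover: "\<forall>J N u. (\<forall>i\<in>J. N i \<ge> 1) \<longrightarrow> (\<forall>i. i \<notin> J \<longrightarrow> u $ Some i = 0) \<longrightarrow>
      (\<exists>v. int_vec v \<and> (\<forall>l. \<bar>lattice_point \<alpha> J N v $ l - u $ l\<bar> \<le> \<mu>))"
    using uniform_lattice_covering_radius[OF assms(6)] by blast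
  define L where "L = 2 * \<bar>\<mu>\<bar> + 2"
  define \<Theta> where "\<Theta> = L * max 1 (L / \<epsilon>) ^ CARD('d)"
  have L: "0 < L" "2 * \<mu> < L" unfolding L_def by auto
  have "F D (lattice_matrix \<alpha> t) (k v* matrix_inv (diagm t)) \<le> ereal \<Theta>"
    if t: "\<forall>i. t i \<ge> 1" and k: "\<forall>i. k $ i \<in> \<int>" for t k
  proof -
    obtain y where y: "y \<in> Fset D (lattice_matrix \<alpha> t) (k v* matrix_inv (diagm t))" "y \<le> \<Theta>"
      using exists_low_point_in_Fset[OF assms(4,5) cover L] t k unfolding \<Theta>_def by blast
    have "finite (Fset D (lattice_matrix \<alpha> t) (k v* matrix_inv (diagm t)) \<inter> {..y})"
      using t by (intro finite_Fset_le[OF assms(2)]) (meson less_le_trans zero_less_one)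
    then show ?thesis using F_le_of_mem_Fset[OF _ y(1)] y(2) by (meson ereal_less_eq(3) order.trans)
  qed
  then show ?thesis unfolding lattice_matrix_def by blast
qed

end
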